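(* Let $G$ be a connected Lie group with universal cover $\widetilde G$, and let $\Gamma$ be an exponent-canceling group with a fixed generating set $\gamma_1,\ldots,\gamma_r$ such that every relation in a finite presentation on these generators has trivial Abelianization; embed $\mathrm{Hom}(\Gamma,H)\subset H^r$ via $\rho\mapsto(\rho(\gamma_1),\ldots,\rho(\gamma_r))$ for $H=G,\widetilde G$. For $1\le k\le r$, let $\iota_k\colon G\to\mathrm{Hom}^0(\Gamma,G)$ be the $k$-th factor inclusion $g\mapsto(e,\ldots,e,g,e,\ldots,e)$ ($g$ in the $k$-th slot), where $\mathrm{Hom}^0(\Gamma,G)$ is the connected component of the trivial representation. If $\mathrm{Hom}(\Gamma,\widetilde G)$ is simply connected, then the factor inclusions induce an isomorphism $$\pi_1(G)^r\to\pi_1(\mathrm{Hom}^0(\Gamma,G)),\qquad (a_1,\ldots,a_r)\mapsto \prod_k(\iota_k)_*(a_k),$$ (basepoints at the identity / trivial representation); in particular, the images of the $(\iota_k)_*$ generate $\pi_1(\mathrm{Hom}^0(\Gamma,G))$.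
   Context: A finitely presented group $\Gamma$ is exponent-canceling if it admits a finite presentation in which the Abelianization of each relation is trivial. *)

theory Defs
  imports "HOL-Analysis.Analysis" "HOL-Algebra.Product_Groups"
begin

definition topological_group :: "'a topology \<Rightarrow> 'a monoid \<Rightarrow> bool" where
  "topological_group X G \<longleftrightarrow>
     group G \<and> carrier G = topspace X \<and>
     continuous_map (prod_topology X X) X (\<lambda>(x, y). x \<otimes>\<^bsub>G\<^esub> y) \<and>
     continuous_map X X (\<lambda>x. inv\<^bsub>G\<^esub> x)"

definition locally_euclidean :: "'a topology \<Rightarrow> nat \<Rightarrow> bool" where
  "locally_euclidean X n \<longleftrightarrow>
     (\<forall>x\<in>topspace X. \<exists>U. openin X U \<and> x \<in> U \<and>
        subtopology X U homeomorphic_space Euclidean_space n)"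

text \<open>A Lie group, up to its (unique) smooth structure: a topological group whose
  underlying space is a topological manifold (Hausdorff, second countable, locally
  Euclidean).  By Gleason--Montgomery--Zippin these are exactly the Lie groups.\<close>
definition lie_group :: "'a topology \<Rightarrow> 'a monoid \<Rightarrow> bool" where
  "lie_group X G \<longleftrightarrow>
     topological_group X G \<and> Hausdorff_space X \<and> second_countable X \<and>
     (\<exists>n. locally_euclidean X n)"

definition loops :: "'a topology \<Rightarrow> 'a \<Rightarrow> (real \<Rightarrow> 'a) set" where
  "loops X x = {g. pathin X g \<and> g 0 = x \<and> g 1 = x}"

definition loop_homotopic :: "'a topology \<Rightarrow> 'a \<Rightarrow> (real \<Rightarrow> 'a) \<Rightarrow> (real \<Rightarrow> 'a) \<Rightarrow> bool" where
  "loop_homotopic X x f g \<longleftrightarrow>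
     f \<in> loops X x \<and> g \<in> loops X x \<and>
     homotopic_with (\<lambda>h. h 0 = x \<and> h 1 = x) (top_of_set {0..1}) X f g"

definition loop_class :: "'a topology \<Rightarrow> 'a \<Rightarrow> (real \<Rightarrow> 'a) \<Rightarrow> (real \<Rightarrow> 'a) set" where
  "loop_class X x f = {g. loop_homotopic X x f g}"

definition path_join :: "(real \<Rightarrow> 'a) \<Rightarrow> (real \<Rightarrow> 'a) \<Rightarrow> real \<Rightarrow> 'a" where
  "path_join f g = (\<lambda>t. if t \<le> 1/2 then f (2 * t) else g (2 * t - 1))"

definition fundamental_group :: "'a topology \<Rightarrow> 'a \<Rightarrow> (real \<Rightarrow> 'a) set monoid" where
  "fundamental_group X x =
     \<lparr>carrier = loop_class X x ` loops X x,
      monoid.mult = (\<lambda>A B. {h. \<exists>a\<in>A. \<exists>b\<in>B. loop_homotopic X x (path_join a b) h}),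
      one = loop_class X x (\<lambda>t. x)\<rparr>"

definition induced_pi1 :: "'b topology \<Rightarrow> 'b \<Rightarrow> ('a \<Rightarrow> 'b) \<Rightarrow> (real \<Rightarrow> 'a) set \<Rightarrow> (real \<Rightarrow> 'b) set" where
  "induced_pi1 Y y f A = {h. \<exists>a\<in>A. loop_homotopic Y y (f \<circ> a) h}"

definition simply_connected_space :: "'a topology \<Rightarrow> bool" where
  "simply_connected_space X \<longleftrightarrow>
     path_connected_space X \<and>
     (\<forall>x\<in>topspace X. \<forall>g\<in>loops X x. loop_homotopic X x g (\<lambda>t. x))"

definition covering_map :: "'a topology \<Rightarrow> 'b topology \<Rightarrow> ('a \<Rightarrow> 'b) \<Rightarrow> bool" where
  "covering_map E B p \<longleftrightarrow>
     continuous_map E B p \<and> p ` topspace E = topspace B \<and>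
     (\<forall>x\<in>topspace B. \<exists>T. openin B T \<and> x \<in> T \<and>
        (\<exists>V. \<Union>V = {e \<in> topspace E. p e \<in> T} \<and> (\<forall>U\<in>V. openin E U) \<and>
             pairwise disjnt V \<and>
             (\<forall>U\<in>V. homeomorphic_map (subtopology E U) (subtopology B T) p)))"

text \<open>A word in the generators \<open>\<gamma>\<^sub>1,\<dots>,\<gamma>\<^sub>r\<close>: a list of letters \<open>(i, b)\<close> standing for
  \<open>\<gamma>\<^sub>i\<close> if \<open>b = False\<close> and \<open>\<gamma>\<^sub>i\<^sup>-\<^sup>1\<close> if \<open>b = True\<close>.\<close>
type_synonym word = "(nat \<times> bool) list"

fun word_eval :: "'a monoid \<Rightarrow> (nat \<Rightarrow> 'a) \<Rightarrow> word \<Rightarrow> 'a" where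
  "word_eval G \<rho> [] = \<one>\<^bsub>G\<^esub>"
| "word_eval G \<rho> ((i, b) # w) =
     (if b then inv\<^bsub>G\<^esub> (\<rho> i) else \<rho> i) \<otimes>\<^bsub>G\<^esub> word_eval G \<rho> w"

text \<open>Abelianization of a word is trivial: each generator has exponent sum zero.\<close>
definition exponent_canceling_word :: "word \<Rightarrow> bool" where
  "exponent_canceling_word w \<longleftrightarrow>
     (\<forall>i. length (filter (\<lambda>l. l = (i, False)) w) = length (filter (\<lambda>l. l = (i, True)) w))"

definition hom_set :: "'a monoid \<Rightarrow> nat \<Rightarrow> word set \<Rightarrow> (nat \<Rightarrow> 'a) set" where
  "hom_set H r R = {\<rho> \<in> (\<Pi>\<^sub>E k\<in>{1..r}. carrier H). \<forall>w\<in>R. word_eval H \<rho> w = \<one>\<^bsub>H\<^esub>}"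

definition hom_space :: "'a topology \<Rightarrow> 'a monoid \<Rightarrow> nat \<Rightarrow> word set \<Rightarrow> (nat \<Rightarrow> 'a) topology" where
  "hom_space X H r R = subtopology (product_topology (\<lambda>k. X) {1..r}) (hom_set H r R)"

definition trivial_rep :: "'a monoid \<Rightarrow> nat \<Rightarrow> nat \<Rightarrow> 'a" where
  "trivial_rep H r = (\<lambda>k\<in>{1..r}. \<one>\<^bsub>H\<^esub>)"

definition hom0_space :: "'a topology \<Rightarrow> 'a monoid \<Rightarrow> nat \<Rightarrow> word set \<Rightarrow> (nat \<Rightarrow> 'a) topology" where
  "hom0_space X H r R =
     subtopology (hom_space X H r R) (connected_component_of_set (hom_space X H r R) (trivial_rep H r))"

definition factor_incl :: "'a monoid \<Rightarrow> nat \<Rightarrow> nat \<Rightarrow> 'a \<Rightarrow> nat \<Rightarrow> 'a" where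
  "factor_incl H r k g = (\<lambda>j\<in>{1..r}. if j = k then g else \<one>\<^bsub>H\<^esub>)"

fun ordprod :: "('a, 'b) monoid_scheme \<Rightarrow> (nat \<Rightarrow> 'a) \<Rightarrow> nat \<Rightarrow> 'a" where
  "ordprod M f 0 = \<one>\<^bsub>M\<^esub>"
| "ordprod M f (Suc n) = ordprod M f n \<otimes>\<^bsub>M\<^esub> f (Suc n)"

end

theory Submission
  imports Defs
begin

text \<open>Write \<open>p : G\<^sup>~ \<rightarrow> G\<close> for the covering.  A loop in \<open>Hom\<^sup>0(\<Gamma>, G)\<close> at the trivial
  representation lifts coordinatewise to a path in \<open>(G\<^sup>~)\<^sup>r\<close> from the trivial representation.
  Along the lift every relator takes values in the discrete fibre \<open>p\<^sup>-\<^sup>1(e)\<close>, so it stays at \<open>e\<close>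
  and the lift runs in \<open>Hom(\<Gamma>, G\<^sup>~)\<close>.  This space being simply connected, two loops whose lifts
  end at the same point are homotopic.  The product of the classes \<open>(\<iota>\<^sub>k)\<^sub>*[\<gamma>\<^sub>k]\<close> is represented by
  the concatenation of the loops \<open>\<iota>\<^sub>k \<circ> \<gamma>\<^sub>k\<close>, which lie in \<open>Hom(\<Gamma>, G)\<close> because the relators are
  exponent-canceling, and its lift ends at the tuple of endpoints of the lifts of the \<open>\<gamma>\<^sub>k\<close>.  This
  gives surjectivity and multiplicativity; injectivity follows by projecting to the coordinates.\<close>

section \<open>Paths and loops\<close>

abbreviation I01 :: "real topology" where "I01 \<equiv> top_of_set {0..1}"

lemma continuous_map_reparam:
  assumes "continuous_map (top_of_set T) Y f" "continuous_on S \<phi>" "\<phi> \<in> S \<rightarrow> T"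
  shows "continuous_map (top_of_set S) Y (\<lambda>x. f (\<phi> x))"
proof -
  have "continuous_map (top_of_set S) (top_of_set T) \<phi>" using assms by simp
  from continuous_map_compose[OF this assms(1)] show ?thesis by (simp add: o_def)
qed

lemma pathin_reparam:
  assumes "pathin X g" "continuous_on S \<phi>" "\<phi> \<in> S \<rightarrow> {0..1}"
  shows "continuous_map (top_of_set S) X (\<lambda>x. g (\<phi> x))"
  using assms continuous_map_reparam unfolding pathin_def by blast

lemma pathin_reverse: "pathin Y \<beta> \<Longrightarrow> pathin Y (\<lambda>t. \<beta> (1 - t))"
  unfolding pathin_def by (rule continuous_map_reparam) (auto intro!: continuous_intros)

lemma pathin_path_join:
  assumes a: "pathin X a" and b: "pathin X b" and ab: "a 1 = b 0"
  shows "pathin X (path_join a b)"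
  unfolding pathin_def path_join_def
proof (rule continuous_map_cases_le)
  show "continuous_map (subtopology I01 {x \<in> topspace I01. x \<le> 1 / 2}) X (\<lambda>t. a (2 * t))"
    by (simp add: subtopology_subtopology, rule pathin_reparam[OF a])
       (intro continuous_intros, auto)
  show "continuous_map (subtopology I01 {x \<in> topspace I01. 1 / 2 \<le> x}) X (\<lambda>t. b (2 * t - 1))"
    by (simp add: subtopology_subtopology, rule pathin_reparam[OF b])
       (intro continuous_intros, auto)
next
  fix t :: real assume "t = 1/2"
  then have "2 * t = 1" "2 * t - 1 = 0" by auto
  then show "a (2 * t) = b (2 * t - 1)" using ab by (simp only:)
qed (simp_all add: continuous_on_id continuous_on_const)

lemma connected_space_I01: "connected_space I01"
  by (rule connected_space_subtopology) (simp add: connected_Icc)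

lemma connected_space_unit_square: "connected_space (top_of_set ({0..1::real} \<times> {0..1::real}))"
  by (rule connected_space_subtopology) (simp add: connected_Times connected_Icc)

lemma homotopic_with_from_square:
  fixes h :: "real \<times> real \<Rightarrow> 'a"
  assumes h: "continuous_map (top_of_set ({0..1} \<times> {0..1})) Y h"
    and h0: "\<And>t. t \<in> {0..1} \<Longrightarrow> h (0, t) = f t"
    and h1: "\<And>t. t \<in> {0..1} \<Longrightarrow> h (1, t) = g t"
    and P: "\<And>s. s \<in> {0..1} \<Longrightarrow> P (\<lambda>t. h (s, t))" and Pf: "P f" and Pg: "P g"
  shows "homotopic_with P I01 Y f g"
proof -
  have edge: "continuous_map I01 Y (\<lambda>t. h (s, t))" if "s \<in> {0..1}" for s
    by (rule continuous_map_reparam[OF h])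
       (use that in \<open>auto intro!: continuous_on_Pair continuous_on_const continuous_on_id\<close>)
  have "homotopic_with P I01 Y (\<lambda>t. h (0, t)) (\<lambda>t. h (1, t))"
    unfolding homotopic_with_def using h P by (intro exI[of _ h]) auto
  moreover have "continuous_map I01 Y f" by (rule continuous_map_eq[OF edge[of 0]]) (auto simp: h0)
  then have "homotopic_with P I01 Y f (\<lambda>t. h (0, t))"
    using Pf P[of 0] h0 by (intro homotopic_with_equal) auto
  moreover have "homotopic_with P I01 Y (\<lambda>t. h (1, t)) g"
    by (rule homotopic_with_equal[where P=P, OF _ Pg edge[of 1]]) (use P h1 in auto)
  ultimately show ?thesis by (meson homotopic_with_trans)
qed

lemma homotopic_with_endpointsE:
  assumes "homotopic_with (\<lambda>h. h 0 = a \<and> h 1 = b) I01 Y f g"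
  obtains h :: "real \<times> real \<Rightarrow> 'a" where "continuous_map (top_of_set ({0..1} \<times> {0..1})) Y h"
    "\<And>t. h (0, t) = f t" "\<And>t. h (1, t) = g t"
    "\<And>s. s \<in> {0..1} \<Longrightarrow> h (s, 0) = a" "\<And>s. s \<in> {0..1} \<Longrightarrow> h (s, 1) = b"
proof -
  obtain h :: "real \<times> real \<Rightarrow> 'a" where "continuous_map (prod_topology I01 I01) Y h"
    "\<forall>t. h (0, t) = f t" "\<forall>t. h (1, t) = g t" "\<forall>s\<in>{0..1}. h (s, 0) = a \<and> h (s, 1) = b"
    using assms unfolding homotopic_with_def by auto
  then show thesis by (intro that[of h]) auto
qed

lemma continuous_map_square_join:
  fixes h1 h2 :: "real \<times> real \<Rightarrow> 'a"
  assumes h1: "continuous_map (top_of_set ({0..1} \<times> {0..1})) X h1"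
    and h2: "continuous_map (top_of_set ({0..1} \<times> {0..1})) X h2"
    and h12: "\<And>s. s \<in> {0..1} \<Longrightarrow> h1 (s, 1) = h2 (s, 0)"
  shows "continuous_map (top_of_set ({0..1} \<times> {0..1})) X
           (\<lambda>z. path_join (\<lambda>t. h1 (fst z, t)) (\<lambda>t. h2 (fst z, t)) (snd z))"
  unfolding path_join_def
proof (rule continuous_map_cases_le)
  show "continuous_map (subtopology (top_of_set ({0..1} \<times> {0..1}))
          {z \<in> topspace (top_of_set ({0..1::real} \<times> {0..1::real})). snd z \<le> 1 / 2}) X
          (\<lambda>z. h1 (fst z, 2 * snd z))"
    by (simp add: subtopology_subtopology, rule continuous_map_reparam[OF h1])
       (intro continuous_intros, auto)
  show "continuous_map (subtopology (top_of_set ({0..1} \<times> {0..1}))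
          {z \<in> topspace (top_of_set ({0..1::real} \<times> {0..1::real})). 1 / 2 \<le> snd z}) X
          (\<lambda>z. h2 (fst z, 2 * snd z - 1))"
    by (simp add: subtopology_subtopology, rule continuous_map_reparam[OF h2])
       (intro continuous_intros, auto)
next
  fix z :: "real \<times> real" assume "z \<in> topspace (top_of_set ({0..1} \<times> {0..1}))" "snd z = 1/2"
  then have "fst z \<in> {0..1}" "2 * snd z = 1" "2 * snd z - 1 = 0" by auto
  then show "h1 (fst z, 2 * snd z) = h2 (fst z, 2 * snd z - 1)" using h12 by (simp only:)
qed (simp_all add: continuous_map_from_subtopology continuous_map_snd continuous_on_const
       continuous_on_snd continuous_on_id)

lemma loop_homotopic_refl: "g \<in> loops X x \<Longrightarrow> loop_homotopic X x g g"
  unfolding loop_homotopic_def loops_def pathin_def by auto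

lemma loop_homotopic_sym: "loop_homotopic X x f g \<Longrightarrow> loop_homotopic X x g f"
  unfolding loop_homotopic_def using homotopic_with_sym by blast

lemma loop_homotopic_trans:
  "loop_homotopic X x f g \<Longrightarrow> loop_homotopic X x g h \<Longrightarrow> loop_homotopic X x f h"
  unfolding loop_homotopic_def using homotopic_with_trans by blast

lemma loop_homotopic_loops: "loop_homotopic X x f g \<Longrightarrow> f \<in> loops X x \<and> g \<in> loops X x"
  unfolding loop_homotopic_def by blast

lemma loop_class_eq:
  assumes "f \<in> loops X x" "g \<in> loops X x"
  shows "loop_class X x f = loop_class X x g \<longleftrightarrow> loop_homotopic X x f g"
proof
  assume "loop_class X x f = loop_class X x g"
  moreover have "g \<in> loop_class X x g" using assms by (simp add: loop_class_def loop_homotopic_refl)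
  ultimately have "g \<in> loop_class X x f" by simp
  then show "loop_homotopic X x f g" by (simp add: loop_class_def)
next
  assume "loop_homotopic X x f g"
  then show "loop_class X x f = loop_class X x g"
    unfolding loop_class_def by (blast intro: loop_homotopic_trans loop_homotopic_sym)
qed

lemma const_loop: "x \<in> topspace X \<Longrightarrow> (\<lambda>t. x) \<in> loops X x"
  by (simp add: loops_def)

lemma loops_compose: "f \<in> loops X x \<Longrightarrow> continuous_map X Y \<phi> \<Longrightarrow> \<phi> \<circ> f \<in> loops Y (\<phi> x)"
  unfolding loops_def by (auto intro: pathin_compose)

lemma path_join_loops:
  assumes "f \<in> loops X x" "g \<in> loops X x" shows "path_join f g \<in> loops X x"
  using assms pathin_path_join[of X f g] by (simp add: loops_def path_join_def)

lemma path_join_cong: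
  assumes "\<And>t. t \<in> {0..1} \<Longrightarrow> a t = a' t" "\<And>t. t \<in> {0..1} \<Longrightarrow> b t = b' t" "t \<in> {0..1}"
  shows "path_join a b t = path_join a' b' t"
  using assms by (simp add: path_join_def)

lemma loop_homotopic_path_join:
  assumes "loop_homotopic X x a f" "loop_homotopic X x b g"
  shows "loop_homotopic X x (path_join a b) (path_join f g)"
proof -
  have "homotopic_with (\<lambda>h. h 0 = x \<and> h 1 = x) I01 X a f"
    using assms(1) by (simp add: loop_homotopic_def)
  then obtain h1 :: "real \<times> real \<Rightarrow> 'a" where h1: "continuous_map (top_of_set ({0..1} \<times> {0..1})) X h1"
    "\<And>t. h1 (0, t) = a t" "\<And>t. h1 (1, t) = f t"
    "\<And>s. s \<in> {0..1} \<Longrightarrow> h1 (s, 0) = x" "\<And>s. s \<in> {0..1} \<Longrightarrow> h1 (s, 1) = x"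
    by (rule homotopic_with_endpointsE) blast
  have "homotopic_with (\<lambda>h. h 0 = x \<and> h 1 = x) I01 X b g"
    using assms(2) by (simp add: loop_homotopic_def)
  then obtain h2 :: "real \<times> real \<Rightarrow> 'a" where h2: "continuous_map (top_of_set ({0..1} \<times> {0..1})) X h2"
    "\<And>t. h2 (0, t) = b t" "\<And>t. h2 (1, t) = g t"
    "\<And>s. s \<in> {0..1} \<Longrightarrow> h2 (s, 0) = x" "\<And>s. s \<in> {0..1} \<Longrightarrow> h2 (s, 1) = x"
    by (rule homotopic_with_endpointsE) blast
  have loops: "path_join a b \<in> loops X x" "path_join f g \<in> loops X x"
    using assms by (auto intro: path_join_loops dest: loop_homotopic_loops)
  have "homotopic_with (\<lambda>h. h 0 = x \<and> h 1 = x) I01 X (path_join a b) (path_join f g)"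
    by (rule homotopic_with_from_square[OF continuous_map_square_join[OF h1(1) h2(1)]])
       (use h1 h2 loops in \<open>auto simp: path_join_def loops_def\<close>)
  then show ?thesis using loops by (simp add: loop_homotopic_def)
qed

lemma fundamental_group_mult_class:
  assumes "f \<in> loops X x" "g \<in> loops X x"
  shows "loop_class X x f \<otimes>\<^bsub>fundamental_group X x\<^esub> loop_class X x g = loop_class X x (path_join f g)"
proof -
  have "f \<in> loop_class X x f" "g \<in> loop_class X x g"
    using assms by (auto simp: loop_class_def loop_homotopic_refl)
  then have "{h. \<exists>a\<in>loop_class X x f. \<exists>b\<in>loop_class X x g. loop_homotopic X x (path_join a b) h}
             = loop_class X x (path_join f g)"
    unfolding loop_class_def
    by (blast intro: loop_homotopic_trans loop_homotopic_path_join loop_homotopic_sym)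
  then show ?thesis by (simp add: fundamental_group_def)
qed

lemma loop_class_in_carrier: "f \<in> loops X x \<Longrightarrow> loop_class X x f \<in> carrier (fundamental_group X x)"
  by (simp add: fundamental_group_def)

lemma fundamental_group_one: "\<one>\<^bsub>fundamental_group X x\<^esub> = loop_class X x (\<lambda>t. x)"
  by (simp add: fundamental_group_def)

lemma loop_homotopic_compose:
  assumes "loop_homotopic X x f g" "continuous_map X Y \<phi>"
  shows "loop_homotopic Y (\<phi> x) (\<phi> \<circ> f) (\<phi> \<circ> g)"
  using assms unfolding loop_homotopic_def loops_def
  by (auto intro: homotopic_with_compose_continuous_map_left pathin_compose)

lemma induced_pi1_loop_class:
  assumes "continuous_map Y Z \<phi>" "f \<in> loops Y y"
  shows "induced_pi1 Z (\<phi> y) \<phi> (loop_class Y y f) = loop_class Z (\<phi> y) (\<phi> \<circ> f)"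
proof -
  have "f \<in> loop_class Y y f" using assms(2) by (simp add: loop_class_def loop_homotopic_refl)
  then have "{h. \<exists>a\<in>loop_class Y y f. loop_homotopic Z (\<phi> y) (\<phi> \<circ> a) h} = loop_class Z (\<phi> y) (\<phi> \<circ> f)"
    unfolding loop_class_def
    by (blast intro: loop_homotopic_trans loop_homotopic_compose[OF _ assms(1)])
  then show ?thesis by (simp add: induced_pi1_def)
qed

lemma loop_homotopic_reparam:
  assumes g: "g \<in> loops X x" and \<phi>: "continuous_on {0..1} \<phi>" "\<phi> \<in> {0..1} \<rightarrow> {0..1}" "\<phi> 0 = 0" "\<phi> 1 = 1"
    and f: "\<And>t. t \<in> {0..1} \<Longrightarrow> f t = g (\<phi> t)" "f 0 = x" "f 1 = x"
  shows "loop_homotopic X x f g"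
proof -
  have pg: "pathin X g" "g 0 = x" "g 1 = x" using g by (auto simp: loops_def)
  have cf: "continuous_map I01 X (\<lambda>t. g (\<phi> t))" by (rule pathin_reparam[OF pg(1) \<phi>(1,2)])
  then have "pathin X f" unfolding pathin_def by (rule continuous_map_eq) (simp add: f)
  then have fl: "f \<in> loops X x" using f by (simp add: loops_def)
  define h where "h = (\<lambda>z::real\<times>real. g ((1 - fst z) * \<phi> (snd z) + fst z * snd z))"
  have conv: "(1 - s) * a + s * b \<in> {0..1}" if "s \<in> {0..1}" "a \<in> {0..1}" "b \<in> {0..1}" for s a b :: real
  proof -
    have "0 \<le> (1 - s) * a + s * b" using that by auto
    moreover have "(1 - s) * a + s * b \<le> (1 - s) * 1 + s * 1"
      using that by (intro add_mono mult_left_mono) auto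
    ultimately show ?thesis by simp
  qed
  have ch: "continuous_map (top_of_set ({0..1} \<times> {0..1})) X h"
    unfolding h_def
  proof (rule pathin_reparam[OF pg(1)])
    show "continuous_on ({0..1} \<times> {0..1}) (\<lambda>z::real\<times>real. (1 - fst z) * \<phi> (snd z) + fst z * snd z)"
      by (intro continuous_intros continuous_on_compose2[OF \<phi>(1)]) auto
    show "(\<lambda>z::real\<times>real. (1 - fst z) * \<phi> (snd z) + fst z * snd z) \<in> {0..1} \<times> {0..1} \<rightarrow> {0..1}"
    proof
      fix z :: "real \<times> real" assume z: "z \<in> {0..1} \<times> {0..1}"
      then have "\<phi> (snd z) \<in> {0..1}" using \<phi>(2) by auto
      then show "(1 - fst z) * \<phi> (snd z) + fst z * snd z \<in> {0..1}"
        using conv[of "fst z" "\<phi> (snd z)" "snd z"] z by auto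
    qed
  qed
  show ?thesis unfolding loop_homotopic_def
  proof (intro conjI fl g)
    show "homotopic_with (\<lambda>h. h 0 = x \<and> h 1 = x) I01 X f g"
      by (rule homotopic_with_from_square[OF ch]) (auto simp: h_def f pg \<phi>)
  qed
qed

lemma loop_homotopic_join_const_right:
  assumes g: "g \<in> loops X x"
  shows "loop_homotopic X x (path_join g (\<lambda>t. x)) g"
proof (rule loop_homotopic_reparam[OF g, of "\<lambda>t. min 1 (2 * t)"])
  show "continuous_on {0..1} (\<lambda>t::real. min 1 (2 * t))" by (intro continuous_intros)
  fix t :: real
  show "path_join g (\<lambda>t. x) t = g (min 1 (2 * t))"
  proof (cases "t \<le> 1/2")
    case True then have "min 1 (2 * t) = 2 * t" by simp
    then show ?thesis using True by (simp add: path_join_def)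
  next
    case False then have "min 1 (2 * t) = 1" by simp
    then show ?thesis using False g by (simp add: path_join_def loops_def)
  qed
qed (use g in \<open>auto simp: path_join_def loops_def\<close>)

lemma loop_homotopic_join_const_left:
  assumes g: "g \<in> loops X x"
  shows "loop_homotopic X x (path_join (\<lambda>t. x) g) g"
proof (rule loop_homotopic_reparam[OF g, of "\<lambda>t. max 0 (2 * t - 1)"])
  show "continuous_on {0..1} (\<lambda>t::real. max 0 (2 * t - 1))" by (intro continuous_intros)
  fix t :: real
  show "path_join (\<lambda>t. x) g t = g (max 0 (2 * t - 1))"
  proof (cases "t \<le> 1/2")
    case True then have "max 0 (2 * t - 1) = 0" by simp
    then show ?thesis using True g by (simp add: path_join_def loops_def)
  next
    case False then have "max 0 (2 * t - 1) = 2 * t - 1" by simp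
    then show ?thesis using False by (simp add: path_join_def)
  qed
qed (use g in \<open>auto simp: path_join_def loops_def\<close>)

section \<open>Covering maps and path lifting\<close>

lemma connected_space_locally_constant:
  assumes Z: "connected_space Z"
    and loc: "\<And>z. z \<in> topspace Z \<Longrightarrow> \<exists>W. openin Z W \<and> z \<in> W \<and> (\<forall>w\<in>W. f w = f z)"
    and z0: "z0 \<in> topspace Z" and z: "z \<in> topspace Z"
  shows "f z = f z0"
proof -
  have level_open: "openin Z {w \<in> topspace Z. Q (f w)}" for Q
  proof (subst openin_subopen, intro ballI)
    fix w assume w: "w \<in> {w \<in> topspace Z. Q (f w)}"
    then obtain W where W: "openin Z W" "w \<in> W" "\<forall>v\<in>W. f v = f w"
      using loc[of w] by blast
    have "W \<subseteq> {w \<in> topspace Z. Q (f w)}" using w W(3) openin_subset[OF W(1)] by auto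
    then show "\<exists>T. openin Z T \<and> w \<in> T \<and> T \<subseteq> {w \<in> topspace Z. Q (f w)}"
      using W(1,2) by blast
  qed
  let ?A = "{w \<in> topspace Z. f w = f z0}"
  have "topspace Z - ?A = {w \<in> topspace Z. f w \<noteq> f z0}" by blast
  then have "closedin Z ?A" using level_open[of "\<lambda>y. y \<noteq> f z0"] by (simp add: closedin_def)
  moreover have "openin Z ?A" by (rule level_open)
  ultimately have "?A = {} \<or> ?A = topspace Z" using Z unfolding connected_space_clopen_in by blast
  then show ?thesis using z0 z by blast
qed

lemma covering_map_continuous: "covering_map E B p \<Longrightarrow> continuous_map E B p"
  unfolding covering_map_def by (elim conjE)

text \<open>Unlike in \<open>covering_map\<close>, the sheets need not be disjoint; path lifting does not use it.\<close>
definition evenly_covered :: "'a topology \<Rightarrow> 'b topology \<Rightarrow> ('a \<Rightarrow> 'b) \<Rightarrow> 'b set \<Rightarrow> bool" where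
  "evenly_covered E B p T \<longleftrightarrow> openin B T \<and>
     (\<exists>V. \<Union>V = {e \<in> topspace E. p e \<in> T} \<and> (\<forall>U\<in>V. openin E U) \<and>
          (\<forall>U\<in>V. homeomorphic_map (subtopology E U) (subtopology B T) p))"

lemma covering_map_evenly_covered:
  assumes "covering_map E B p" "x \<in> topspace B"
  obtains T where "evenly_covered E B p T" "x \<in> T"
proof -
  obtain T where "openin B T" "x \<in> T" "\<exists>V. \<Union>V = {e \<in> topspace E. p e \<in> T} \<and>
      (\<forall>U\<in>V. openin E U) \<and> pairwise disjnt V \<and>
      (\<forall>U\<in>V. homeomorphic_map (subtopology E U) (subtopology B T) p)"
    using assms unfolding covering_map_def by (elim conjE) (drule bspec, assumption, elim exE conjE, blast)
  then have "evenly_covered E B p T"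
    unfolding evenly_covered_def by (elim exE conjE) (intro conjI exI, assumption+)
  then show thesis using that \<open>x \<in> T\<close> by blast
qed

lemma evenly_covered_sheet:
  assumes "evenly_covered E B p T" "e \<in> topspace E" "p e \<in> T"
  obtains U where "openin E U" "e \<in> U" "homeomorphic_map (subtopology E U) (subtopology B T) p"
proof -
  obtain V where V: "\<Union>V = {e \<in> topspace E. p e \<in> T}" "\<forall>U\<in>V. openin E U"
    "\<forall>U\<in>V. homeomorphic_map (subtopology E U) (subtopology B T) p"
    using assms(1) unfolding evenly_covered_def by (elim exE conjE) (rule that, assumption+)
  then have "e \<in> \<Union>V" using assms(2,3) by simp
  then obtain U where "U \<in> V" "e \<in> U" by (rule UnionE)
  then show thesis using that V(2,3) by blast
qed

lemma evenly_covered_local_section: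
  assumes T: "evenly_covered E B p T" and e: "e \<in> topspace E" "p e \<in> T"
  obtains q where "continuous_map (subtopology B T) E q" "q (p e) = e" "\<And>y. y \<in> T \<Longrightarrow> p (q y) = y"
proof -
  obtain U where U: "openin E U" "e \<in> U" "homeomorphic_map (subtopology E U) (subtopology B T) p"
    by (rule evenly_covered_sheet[OF T e])
  then obtain q where q: "homeomorphic_maps (subtopology E U) (subtopology B T) p q"
    using homeomorphic_map_maps by blast
  have TB: "T \<subseteq> topspace B" using T openin_subset by (auto simp: evenly_covered_def)
  have UE: "U \<subseteq> topspace E" using U(1) openin_subset by blast
  show thesis
  proof (rule that)
    have "continuous_map (subtopology B T) (subtopology E U) q"
      using q by (simp add: homeomorphic_maps_def)
    then show "continuous_map (subtopology B T) E q" using continuous_map_in_subtopology by blast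
    show "q (p e) = e" using q U UE by (auto simp: homeomorphic_maps_def)
    show "p (q y) = y" if "y \<in> T" for y using q that TB by (auto simp: homeomorphic_maps_def)
  qed
qed

lemma covering_map_locally_injective:
  assumes p: "covering_map E B p" and e: "e \<in> topspace E"
  obtains U where "openin E U" "e \<in> U" "inj_on p U"
proof -
  have "p e \<in> topspace B" using covering_map_continuous[OF p] e by (simp add: continuous_map_def Pi_iff)
  then obtain T where "evenly_covered E B p T" "p e \<in> T" by (rule covering_map_evenly_covered[OF p])
  then obtain U where U: "openin E U" "e \<in> U" "homeomorphic_map (subtopology E U) (subtopology B T) p"
    using evenly_covered_sheet e by metis
  then have "inj_on p (topspace (subtopology E U))" using homeomorphic_imp_injective_map by blast
  then show thesis using that U openin_subset[OF U(1)] by (simp add: Int_absorb1)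
qed

lemma covering_map_fibrewise_constant:
  assumes p: "covering_map E B p" and Z: "connected_space Z" and f: "continuous_map Z E f"
    and c: "\<And>z. z \<in> topspace Z \<Longrightarrow> p (f z) = c"
    and z0: "z0 \<in> topspace Z" and z: "z \<in> topspace Z"
  shows "f z = f z0"
proof (rule connected_space_locally_constant[OF Z _ z0 z])
  fix z assume z: "z \<in> topspace Z"
  then have "f z \<in> topspace E" using f by (auto simp: continuous_map_def)
  then obtain U where U: "openin E U" "f z \<in> U" "inj_on p U" by (rule covering_map_locally_injective[OF p])
  let ?W = "{w \<in> topspace Z. f w \<in> U}"
  have "openin Z ?W" using f U(1) by (simp add: continuous_map_def)
  moreover have "f w = f z" if "w \<in> ?W" for w
  proof -
    have "f w \<in> U" "p (f w) = p (f z)" using that z c by auto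
    then show ?thesis using U(2,3) by (meson inj_onD)
  qed
  ultimately show "\<exists>W. openin Z W \<and> z \<in> W \<and> (\<forall>w\<in>W. f w = f z)" using z U(2) by blast
qed

lemma covering_map_path_lebesgue_number:
  assumes p: "covering_map E B p" and g: "pathin B g"
  obtains \<epsilon> :: real where "0 < \<epsilon>"
    "\<And>x. x \<in> {0..1} \<Longrightarrow> \<exists>T. evenly_covered E B p T \<and> g ` ({0..1} \<inter> ball x \<epsilon>) \<subseteq> T"
proof -
  define \<G> where "\<G> = {Q. open Q \<and> (\<exists>T. evenly_covered E B p T \<and> g ` ({0..1} \<inter> Q) \<subseteq> T)}"
  have "{0..1} \<subseteq> \<Union>\<G>"
  proof
    fix t :: real assume t: "t \<in> {0..1}"
    then have "g t \<in> topspace B" using g by (auto simp: pathin_def continuous_map_def)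
    then obtain T where T: "evenly_covered E B p T" "g t \<in> T" by (rule covering_map_evenly_covered[OF p])
    moreover have "openin B T" using T(1) unfolding evenly_covered_def by (elim conjE)
    ultimately have "openin I01 {s \<in> topspace I01. g s \<in> T}"
      using g unfolding pathin_def continuous_map_def by blast
    then obtain Q where Q: "open Q" "{s \<in> {0..1}. g s \<in> T} = {0..1} \<inter> Q"
      by (auto simp: openin_open)
    then have "Q \<in> \<G>" unfolding \<G>_def using T(1) by blast
    moreover have "t \<in> Q" using Q(2) t T(2) by blast
    ultimately show "t \<in> \<Union>\<G>" by blast
  qed
  moreover have "\<And>Q. Q \<in> \<G> \<Longrightarrow> open Q" by (simp add: \<G>_def)
  ultimately obtain \<epsilon> :: real where \<epsilon>: "0 < \<epsilon>" "\<And>x. x \<in> {0..1} \<Longrightarrow> \<exists>Q\<in>\<G>. ball x \<epsilon> \<subseteq> Q"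
    using Heine_Borel_lemma[OF compact_Icc] by blast
  show thesis
  proof (rule that[OF \<epsilon>(1)])
    fix x :: real assume "x \<in> {0..1}"
    then obtain Q T where "ball x \<epsilon> \<subseteq> Q" "evenly_covered E B p T" "g ` ({0..1} \<inter> Q) \<subseteq> T"
      using \<epsilon>(2) unfolding \<G>_def by blast
    then show "\<exists>T. evenly_covered E B p T \<and> g ` ({0..1} \<inter> ball x \<epsilon>) \<subseteq> T" by blast
  qed
qed

lemma covering_map_path_subdivision:
  assumes p: "covering_map E B p" and g: "pathin B g"
  obtains N :: nat where "0 < N"
    "\<And>m. m < N \<Longrightarrow> \<exists>T. evenly_covered E B p T \<and> g ` {real m / N..real (Suc m) / N} \<subseteq> T"
proof -
  obtain \<epsilon> :: real where \<epsilon>: "0 < \<epsilon>"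
    "\<And>x. x \<in> {0..1} \<Longrightarrow> \<exists>T. evenly_covered E B p T \<and> g ` ({0..1} \<inter> ball x \<epsilon>) \<subseteq> T"
    by (rule covering_map_path_lebesgue_number[OF p g]) blast
  obtain N :: nat where N: "1 / \<epsilon> < N" using reals_Archimedean2 by blast
  then have Npos: "0 < N" using \<epsilon> by (metis of_nat_0_less_iff divide_pos_pos less_trans zero_less_one)
  have step: "1 / real N < \<epsilon>" using N \<epsilon> Npos by (simp add: field_simps)
  show thesis
  proof (rule that[OF Npos])
    fix m assume m: "m < N"
    have "{real m / N..real (Suc m) / N} \<subseteq> {0..1} \<inter> ball (real m / N) \<epsilon>"
    proof
      fix s assume s: "s \<in> {real m / N..real (Suc m) / N}"
      have "real (Suc m) / N \<le> 1" using m Npos by (simp add: field_simps)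
      moreover have "dist (real m / N) s \<le> real (Suc m) / N - real m / N"
        using s by (auto simp: dist_real_def)
      moreover have "real (Suc m) / N - real m / N = 1 / N" using Npos by (simp add: field_simps)
      ultimately show "s \<in> {0..1} \<inter> ball (real m / N) \<epsilon>"
        using s step by (auto intro: order_trans[rotated])
    qed
    moreover have "real m / N \<in> {0..1}" using m by (auto simp: field_simps)
    ultimately show "\<exists>T. evenly_covered E B p T \<and> g ` {real m / N..real (Suc m) / N} \<subseteq> T"
      using \<epsilon>(2) by (meson image_mono order_trans)
  qed
qed

lemma covering_map_extend_lift:
  assumes h: "continuous_map (top_of_set {0..a}) E h" "\<And>t. t \<in> {0..a} \<Longrightarrow> p (h t) = g t"
    and g: "pathin B g" and ab: "0 \<le> a" "a \<le> b" "b \<le> 1"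
    and T: "evenly_covered E B p T" "g ` {a..b} \<subseteq> T"
  obtains h' where "continuous_map (top_of_set {0..b}) E h'" "\<And>t. t \<in> {0..a} \<Longrightarrow> h' t = h t"
    "\<And>t. t \<in> {0..b} \<Longrightarrow> p (h' t) = g t"
proof -
  have ha: "h a \<in> topspace E" "p (h a) = g a" using h ab by (auto simp: continuous_map_def)
  moreover have "g a \<in> T" using T(2) ab by auto
  ultimately obtain q where q: "continuous_map (subtopology B T) E q" "q (p (h a)) = h a"
    "\<And>y. y \<in> T \<Longrightarrow> p (q y) = y"
    using evenly_covered_local_section[OF T(1), of "h a"] by auto
  have "continuous_map (top_of_set {a..b}) B g"
    by (rule continuous_map_from_subtopology_mono[OF g[unfolded pathin_def]]) (use ab in auto)
  then have cg: "continuous_map (top_of_set {a..b}) (subtopology B T) g"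
    using T(2) by (auto simp: continuous_map_in_subtopology)
  define h' where "h' t = (if t \<le> a then h t else q (g t))" for t
  have "continuous_map (top_of_set {0..b}) E h'"
    unfolding h'_def
  proof (rule continuous_map_cases_le)
    have "{0..b} \<inter> {x. x \<in> topspace (top_of_set {0..b}) \<and> x \<le> a} = {0..a}" using ab by auto
    then show "continuous_map (subtopology (top_of_set {0..b}) {x \<in> topspace (top_of_set {0..b}). x \<le> a}) E h"
      using h(1) by (simp add: subtopology_subtopology)
    have "{0..b} \<inter> {x. x \<in> topspace (top_of_set {0..b}) \<and> a \<le> x} = {a..b}" using ab by auto
    then show "continuous_map (subtopology (top_of_set {0..b}) {x \<in> topspace (top_of_set {0..b}). a \<le> x})
        E (\<lambda>t. q (g t))"
      using continuous_map_compose[OF cg q(1)] by (simp add: subtopology_subtopology o_def)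
  qed (use q(2) ha in \<open>simp_all add: continuous_on_id continuous_on_const\<close>)
  moreover have "h' t = h t" if "t \<in> {0..a}" for t using that by (simp add: h'_def)
  moreover have "p (h' t) = g t" if "t \<in> {0..b}" for t
  proof (cases "t \<le> a")
    case True then show ?thesis using that h(2) by (simp add: h'_def)
  next
    case False then have "g t \<in> T" using that T(2) by auto
    then show ?thesis using False q(3) by (simp add: h'_def)
  qed
  ultimately show thesis by (rule that)
qed

lemma covering_map_path_lift:
  assumes p: "covering_map E B p" and g: "pathin B g" and e: "e \<in> topspace E" and ge: "p e = g 0"
  shows "\<exists>h. pathin E h \<and> h 0 = e \<and> (\<forall>t\<in>{0..1}. p (h t) = g t)"
proof -
  obtain N :: nat where N: "0 < N"
    "\<And>m. m < N \<Longrightarrow> \<exists>T. evenly_covered E B p T \<and> g ` {real m / N..real (Suc m) / N} \<subseteq> T"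
    by (rule covering_map_path_subdivision[OF p g]) blast
  have "\<exists>h. continuous_map (top_of_set {0..real m / N}) E h \<and> h 0 = e \<and>
          (\<forall>t\<in>{0..real m / N}. p (h t) = g t)" if "m \<le> N" for m
    using that
  proof (induction m)
    case 0
    show ?case using e ge by (intro exI[of _ "\<lambda>_. e"]) auto
  next
    case (Suc m)
    then obtain h where h: "continuous_map (top_of_set {0..real m / N}) E h" "h 0 = e"
      "\<forall>t\<in>{0..real m / N}. p (h t) = g t" by auto
    obtain T where T: "evenly_covered E B p T" "g ` {real m / N..real (Suc m) / N} \<subseteq> T"
      using N(2)[of m] Suc.prems by auto
    have "0 \<le> real m / N" "real m / N \<le> real (Suc m) / N" "real (Suc m) / N \<le> 1"
      using Suc.prems N(1) by (auto simp: divide_right_mono field_simps)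
    then obtain h' where h': "continuous_map (top_of_set {0..real (Suc m) / N}) E h'"
      "\<And>t. t \<in> {0..real m / N} \<Longrightarrow> h' t = h t" "\<And>t. t \<in> {0..real (Suc m) / N} \<Longrightarrow> p (h' t) = g t"
      using covering_map_extend_lift[OF h(1) _ g _ _ _ T] h(3) by blast
    then show ?case using h(2) N(1) by (intro exI[of _ h']) auto
  qed
  from this[of N] N(1) show ?thesis by (auto simp: pathin_def)
qed


section \<open>Paths in simply connected spaces\<close>

text \<open>\<open>square_fold\<close> maps the left edge of the unit square onto the lower half of the left edge,
  the right edge onto the upper half (reversed), the bottom edge around the bottom, right and top
  sides, and the top edge to the midpoint of the left edge.  Precomposing a null-homotopy of the
  loop \<open>\<alpha>\<close> followed by \<open>\<beta>\<close> backwards with it gives a homotopy from \<open>\<alpha>\<close> to \<open>\<beta>\<close> rel endpoints.\<close>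
definition square_fold :: "real \<times> real \<Rightarrow> real \<times> real" where
  "square_fold z = ((1 - snd z) * min 1 (min (3 * fst z) (3 - 3 * fst z)),
                    (1 - snd z) * max 0 (min 1 (3 * fst z - 1)) + snd z / 2)"

lemma square_fold_continuous: "continuous_on A square_fold"
  unfolding square_fold_def by (intro continuous_intros) auto

lemma square_fold_in_square:
  assumes "z \<in> {0..1} \<times> {0..1}" shows "square_fold z \<in> {0..1} \<times> {0..1}"
proof -
  obtain s t where z: "z = (s, t)" "s \<in> {0..1}" "t \<in> {0..1}" using assms by auto
  define u where "u = min 1 (min (3 * s) (3 - 3 * s))"
  define v where "v = max 0 (min 1 (3 * s - 1))"
  have uv: "u \<in> {0..1}" "v \<in> {0..1}" using z by (auto simp: u_def v_def)
  then have "(1 - t) * u \<in> {0..1}" using z(3) by (auto intro: mult_le_one)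
  moreover have "(1 - t) * v \<le> 1 - t" using uv z(3) mult_left_mono[of v 1 "1 - t"] by auto
  then have "(1 - t) * v + t / 2 \<in> {0..1}" using uv z(3) by auto
  ultimately show ?thesis by (simp add: square_fold_def z u_def v_def)
qed

lemma square_fold_edges:
  "square_fold (0, t) = (0, t / 2)" "square_fold (1, t) = (0, 1 - t / 2)" "square_fold (s, 1) = (0, 1 / 2)"
  by (simp_all add: square_fold_def algebra_simps)

lemma square_fold_bottom:
  "fst (square_fold (s, 0)) = 1 \<or> snd (square_fold (s, 0)) = 0 \<or> snd (square_fold (s, 0)) = 1"
  by (simp add: square_fold_def) linarith

lemma simply_connected_homotopic_paths:
  assumes sc: "simply_connected_space Y" and a: "pathin Y \<alpha>" and b: "pathin Y \<beta>"
    and e: "\<beta> 0 = \<alpha> 0" and z: "\<beta> 1 = \<alpha> 1"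
  shows "homotopic_with (\<lambda>h. h 0 = \<alpha> 0 \<and> h 1 = \<alpha> 1) I01 Y \<alpha> \<beta>"
proof -
  define L where "L = path_join \<alpha> (\<lambda>t. \<beta> (1 - t))"
  have "pathin Y L" unfolding L_def using a pathin_reverse[OF b] z by (intro pathin_path_join) auto
  then have "L \<in> loops Y (\<alpha> 0)" using e by (simp add: loops_def L_def path_join_def)
  moreover have "\<alpha> 0 \<in> topspace Y" using a by (simp add: path_start_in_topspace)
  ultimately have "homotopic_with (\<lambda>h. h 0 = \<alpha> 0 \<and> h 1 = \<alpha> 0) I01 Y L (\<lambda>t. \<alpha> 0)"
    using sc unfolding simply_connected_space_def loop_homotopic_def by blast
  then obtain K :: "real \<times> real \<Rightarrow> 'a" where K: "continuous_map (top_of_set ({0..1} \<times> {0..1})) Y K"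
    "\<And>t. K (0, t) = L t" "\<And>t. K (1, t) = \<alpha> 0"
    "\<And>s. s \<in> {0..1} \<Longrightarrow> K (s, 0) = \<alpha> 0" "\<And>s. s \<in> {0..1} \<Longrightarrow> K (s, 1) = \<alpha> 0"
    by (rule homotopic_with_endpointsE) blast
  have H: "continuous_map (top_of_set ({0..1} \<times> {0..1})) Y (\<lambda>z. K (square_fold z))"
    by (rule continuous_map_reparam[OF K(1) square_fold_continuous]) (use square_fold_in_square in blast)
  show ?thesis
  proof (rule homotopic_with_from_square[OF H])
    fix t :: real assume "t \<in> {0..1}"
    then show "K (square_fold (0, t)) = \<alpha> t" using K(2) by (simp add: square_fold_edges L_def path_join_def)
  next
    fix t :: real assume t: "t \<in> {0..1}"
    show "K (square_fold (1, t)) = \<beta> t"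
    proof (cases "t = 1")
      case True then show ?thesis using K(2) z by (simp add: square_fold_edges L_def path_join_def)
    next
      case False
      then have "\<not> 1 - t / 2 \<le> 1 / 2" using t by auto
      moreover have "1 - (2 * (1 - t / 2) - 1) = t" by simp
      ultimately show ?thesis using K(2) by (simp add: square_fold_edges L_def path_join_def)
    qed
  next
    fix s :: real assume s: "s \<in> {0..1}"
    obtain u v where uv: "square_fold (s, 0) = (u, v)" by fastforce
    then have "u \<in> {0..1}" "v \<in> {0..1}" using square_fold_in_square[of "(s, 0)"] s by auto
    then have "K (square_fold (s, 0)) = \<alpha> 0" using square_fold_bottom[of s] uv K(3-5) by auto
    moreover have "K (square_fold (s, 1)) = \<alpha> 1"
      using K(2) by (simp add: square_fold_edges L_def path_join_def)
    ultimately show "K (square_fold (s, 0)) = \<alpha> 0 \<and> K (square_fold (s, 1)) = \<alpha> 1" ..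
  qed (use e z in auto)
qed

section \<open>Words and topological groups\<close>

lemma word_eval_cong:
  "(\<And>i b. (i, b) \<in> set w \<Longrightarrow> \<rho> i = \<sigma> i) \<Longrightarrow> word_eval G \<rho> w = word_eval G \<sigma> w"
proof (induction w)
  case (Cons l w)
  obtain i b where l: "l = (i, b)" by (cases l)
  have "\<rho> i = \<sigma> i" using Cons.prems[of i b] l by simp
  moreover have "word_eval G \<rho> w = word_eval G \<sigma> w" using Cons.IH Cons.prems by auto
  ultimately show ?case using l by simp
qed simp

lemma word_eval_closed:
  assumes "group G" "\<And>i b. (i, b) \<in> set w \<Longrightarrow> \<rho> i \<in> carrier G"
  shows "word_eval G \<rho> w \<in> carrier G"
  using assms(2)
proof (induction w)
  case Nil then show ?case using assms(1) by (simp add: group.is_monoid monoid.one_closed)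
next
  case (Cons l w)
  obtain i b where l: "l = (i, b)" by (cases l)
  have "\<rho> i \<in> carrier G" using Cons.prems l by auto
  moreover have "word_eval G \<rho> w \<in> carrier G" using Cons by auto
  ultimately show ?case using assms(1) l by (auto intro: group.inv_closed monoid.m_closed group.is_monoid)
qed

lemma word_eval_hom:
  assumes G: "group G" and H: "group H" and h: "h \<in> hom G H"
    and c: "\<And>i b. (i, b) \<in> set w \<Longrightarrow> \<rho> i \<in> carrier G"
  shows "h (word_eval G \<rho> w) = word_eval H (\<lambda>i. h (\<rho> i)) w"
  using c
proof (induction w)
  case Nil then show ?case using hom_one[OF h G H] by simp
next
  case (Cons l w)
  obtain i b where l: "l = (i, b)" by (cases l)
  have ri: "\<rho> i \<in> carrier G" using Cons.prems l by auto
  have cw: "word_eval G \<rho> w \<in> carrier G" using Cons.prems by (intro word_eval_closed[OF G]) auto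
  have IH: "h (word_eval G \<rho> w) = word_eval H (\<lambda>i. h (\<rho> i)) w" using Cons by auto
  have gh: "group_hom G H h" using G H h by (simp add: group_hom_def group_hom_axioms_def)
  show ?case
  proof (cases b)
    case True
    then show ?thesis using l ri cw IH hom_mult[OF h] group.inv_closed[OF G ri] group_hom.hom_inv[OF gh ri]
      by simp
  next
    case False
    then show ?thesis using l ri cw IH hom_mult[OF h] by simp
  qed
qed

lemma word_eval_ones:
  assumes "group G" "\<And>i b. (i, b) \<in> set w \<Longrightarrow> \<rho> i = \<one>\<^bsub>G\<^esub>"
  shows "word_eval G \<rho> w = \<one>\<^bsub>G\<^esub>"
  using assms(2)
proof (induction w)
  case (Cons l w)
  obtain i b where l: "l = (i, b)" by (cases l)
  have "\<rho> i = \<one>\<^bsub>G\<^esub>" using Cons.prems[of i b] l by simp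
  moreover have "word_eval G \<rho> w = \<one>\<^bsub>G\<^esub>" using Cons.IH Cons.prems by auto
  ultimately show ?case
    using l assms(1) by (simp add: monoid.inv_one group.is_monoid monoid.l_one monoid.one_closed)
qed simp

definition exponent_sum :: "nat \<Rightarrow> word \<Rightarrow> int" where
  "exponent_sum k w =
     int (length (filter (\<lambda>l. l = (k, False)) w)) - int (length (filter (\<lambda>l. l = (k, True)) w))"

lemma word_eval_single_generator:
  assumes G: "group G" and g: "g \<in> carrier G"
    and \<rho>: "\<And>i b. (i, b) \<in> set w \<Longrightarrow> \<rho> i = (if i = k then g else \<one>\<^bsub>G\<^esub>)"
  shows "word_eval G \<rho> w = g [^]\<^bsub>G\<^esub> exponent_sum k w"
  using \<rho>
proof (induction w)
  case Nil then show ?case by (simp add: exponent_sum_def)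
next
  case (Cons l w)
  obtain i b where l: "l = (i, b)" by (cases l)
  define n :: int where "n = (if i = k then if b then -1 else 1 else 0)"
  have "exponent_sum k (l # w) = n + exponent_sum k w" by (simp add: exponent_sum_def l n_def)
  then have "g [^]\<^bsub>G\<^esub> exponent_sum k (l # w) = g [^]\<^bsub>G\<^esub> n \<otimes>\<^bsub>G\<^esub> g [^]\<^bsub>G\<^esub> exponent_sum k w"
    by (simp add: group.int_pow_mult[OF G g])
  moreover have "g [^]\<^bsub>G\<^esub> n = (if b then inv\<^bsub>G\<^esub> (\<rho> i) else \<rho> i)"
    using Cons.prems[of i b] G g group.int_pow_neg[OF G g, of 1]
    by (simp add: l n_def group.int_pow_1 monoid.inv_one group.is_monoid)
  moreover have "word_eval G \<rho> w = g [^]\<^bsub>G\<^esub> exponent_sum k w" using Cons by auto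
  ultimately show ?case by (simp add: l)
qed

lemma word_eval_factor_incl:
  assumes G: "group G" and g: "g \<in> carrier G" and w: "\<And>i b. (i, b) \<in> set w \<Longrightarrow> i \<in> {1..r}"
    and canc: "exponent_canceling_word w"
  shows "word_eval G (factor_incl G r k g) w = \<one>\<^bsub>G\<^esub>"
proof -
  have "word_eval G (factor_incl G r k g) w = g [^]\<^bsub>G\<^esub> exponent_sum k w"
    by (rule word_eval_single_generator[OF G g]) (use w in \<open>auto simp: factor_incl_def\<close>)
  then show ?thesis using canc by (simp add: exponent_canceling_word_def exponent_sum_def)
qed

lemma topological_group_group: "topological_group X G \<Longrightarrow> group G"
  by (simp add: topological_group_def)

lemma topological_group_carrier: "topological_group X G \<Longrightarrow> carrier G = topspace X"
  by (simp add: topological_group_def)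

lemma continuous_map_group_mult:
  assumes "topological_group X G" "continuous_map Z X f" "continuous_map Z X g"
  shows "continuous_map Z X (\<lambda>z. f z \<otimes>\<^bsub>G\<^esub> g z)"
proof -
  have m: "continuous_map (prod_topology X X) X (\<lambda>(x, y). x \<otimes>\<^bsub>G\<^esub> y)"
    using assms(1) by (simp add: topological_group_def)
  have "continuous_map Z (prod_topology X X) (\<lambda>z. (f z, g z))"
    using assms(2,3) by (rule continuous_map_pairedI)
  from continuous_map_compose[OF this m] show ?thesis by (simp add: o_def)
qed

lemma continuous_map_group_inv:
  assumes "topological_group X G" "continuous_map Z X f"
  shows "continuous_map Z X (\<lambda>z. inv\<^bsub>G\<^esub> f z)"
proof -
  have m: "continuous_map X X (\<lambda>x. inv\<^bsub>G\<^esub> x)"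
    using assms(1) unfolding topological_group_def by (elim conjE)
  from continuous_map_compose[OF assms(2) m] show ?thesis by (simp add: o_def)
qed

lemma topological_group_one:
  assumes "topological_group X G" shows "\<one>\<^bsub>G\<^esub> \<in> topspace X"
proof -
  have "group G" "carrier G = topspace X"
    using topological_group_group[OF assms] topological_group_carrier[OF assms] by auto
  then show ?thesis using group.is_monoid monoid.one_closed by metis
qed

lemma continuous_map_word_eval:
  assumes tg: "topological_group X G" and w: "\<And>i b. (i, b) \<in> set w \<Longrightarrow> i \<in> I"
  shows "continuous_map (product_topology (\<lambda>k. X) I) X (\<lambda>\<rho>. word_eval G \<rho> w)"
  using w
proof (induction w)
  case Nil then show ?case using topological_group_one[OF tg] by simp
next
  case (Cons l w)
  obtain i b where l: "l = (i, b)" by (cases l)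
  have iI: "i \<in> I" using Cons.prems l by auto
  have ci: "continuous_map (product_topology (\<lambda>k. X) I) X (\<lambda>\<rho>. \<rho> i)"
    using continuous_map_product_projection[OF iI, of "\<lambda>k. X"] by simp
  have cw: "continuous_map (product_topology (\<lambda>k. X) I) X (\<lambda>\<rho>. word_eval G \<rho> w)" using Cons by auto
  show ?case
  proof (cases b)
    case True
    then show ?thesis using l continuous_map_group_mult[OF tg continuous_map_group_inv[OF tg ci] cw] by simp
  next
    case False
    then show ?thesis using l continuous_map_group_mult[OF tg ci cw] by simp
  qed
qed

section \<open>Representation spaces\<close>

primrec factor_loop_concat ::
  "'g monoid \<Rightarrow> nat \<Rightarrow> (nat \<Rightarrow> real \<Rightarrow> 'g) \<Rightarrow> nat \<Rightarrow> real \<Rightarrow> nat \<Rightarrow> 'g" where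
  "factor_loop_concat G r f 0 = (\<lambda>t. trivial_rep G r)"
| "factor_loop_concat G r f (Suc n) =
     path_join (factor_loop_concat G r f n) (\<lambda>t. factor_incl G r (Suc n) (f (Suc n) t))"

definition translate_rep :: "'h monoid \<Rightarrow> nat \<Rightarrow> (nat \<Rightarrow> 'h) \<Rightarrow> (nat \<Rightarrow> 'h) \<Rightarrow> nat \<Rightarrow> 'h" where
  "translate_rep H r c \<rho> = (\<lambda>k\<in>{1..r}. c k \<otimes>\<^bsub>H\<^esub> \<rho> k)"

text \<open>Given lifts \<open>ft k\<close> of the loops \<open>f k\<close>, this is the lift of \<open>factor_loop_concat G r f n\<close>:
  each new factor path is translated to start where the previous one ended.\<close>
primrec factor_lift_concat ::
  "'h monoid \<Rightarrow> nat \<Rightarrow> (nat \<Rightarrow> real \<Rightarrow> 'h) \<Rightarrow> nat \<Rightarrow> real \<Rightarrow> nat \<Rightarrow> 'h" where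
  "factor_lift_concat H r ft 0 = (\<lambda>t. trivial_rep H r)"
| "factor_lift_concat H r ft (Suc n) =
     path_join (factor_lift_concat H r ft n)
       (\<lambda>t. translate_rep H r (factor_lift_concat H r ft n 1) (factor_incl H r (Suc n) (ft (Suc n) t)))"

definition lift_ends :: "'h monoid \<Rightarrow> nat \<Rightarrow> (nat \<Rightarrow> real \<Rightarrow> 'h) \<Rightarrow> nat \<Rightarrow> nat \<Rightarrow> 'h" where
  "lift_ends H r ft n = (\<lambda>k\<in>{1..r}. if k \<le> n then ft k 1 else \<one>\<^bsub>H\<^esub>)"

lemma translate_rep_trivial:
  assumes "group H" "c \<in> (\<Pi>\<^sub>E k\<in>{1..r}. carrier H)"
  shows "translate_rep H r c (trivial_rep H r) = c"
proof -
  have "c k \<otimes>\<^bsub>H\<^esub> \<one>\<^bsub>H\<^esub> = c k" if "k \<in> {1..r}" for k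
    using assms that by (auto simp: group.is_monoid monoid.r_one PiE_iff)
  then show ?thesis using assms(2) by (auto simp: translate_rep_def trivial_rep_def PiE_iff extensional_def)
qed

lemma translate_rep_lift_ends:
  assumes H: "group H" and ft: "\<And>k. k \<in> {1..r} \<Longrightarrow> ft k 1 \<in> carrier H" and n: "Suc n \<in> {1..r}"
  shows "translate_rep H r (lift_ends H r ft n) (factor_incl H r (Suc n) (ft (Suc n) 1))
         = lift_ends H r ft (Suc n)"
proof -
  have "(if j \<le> n then ft j 1 else \<one>\<^bsub>H\<^esub>) \<otimes>\<^bsub>H\<^esub> (if j = Suc n then ft (Suc n) 1 else \<one>\<^bsub>H\<^esub>)
        = (if j \<le> Suc n then ft j 1 else \<one>\<^bsub>H\<^esub>)" if j: "j \<in> {1..r}" for j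
    using H ft[OF j] ft[OF n] by (auto simp: group.is_monoid monoid.r_one monoid.l_one monoid.one_closed)
  then show ?thesis by (auto simp: translate_rep_def factor_incl_def lift_ends_def)
qed

lemma continuous_map_factor_incl_product:
  assumes tg: "topological_group X G" and g: "continuous_map Z X g"
  shows "continuous_map Z (product_topology (\<lambda>k. X) {1..r}) (\<lambda>z. factor_incl G r k (g z))"
  unfolding continuous_map_componentwise
proof (intro conjI ballI)
  show "(\<lambda>z. factor_incl G r k (g z)) ` topspace Z \<subseteq> extensional {1..r}" by (auto simp: factor_incl_def)
  fix j assume "j \<in> {1..r}"
  then show "continuous_map Z X (\<lambda>z. factor_incl G r k (g z) j)"
    using g topological_group_one[OF tg] by (simp add: factor_incl_def)
qed

lemma continuous_map_translate_rep:
  assumes tg: "topological_group X G" and c: "c \<in> (\<Pi>\<^sub>E k\<in>{1..r}. carrier G)"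
    and \<rho>: "continuous_map Z (product_topology (\<lambda>k. X) {1..r}) \<rho>"
  shows "continuous_map Z (product_topology (\<lambda>k. X) {1..r}) (\<lambda>z. translate_rep G r c (\<rho> z))"
  unfolding continuous_map_componentwise
proof (intro conjI ballI)
  show "(\<lambda>z. translate_rep G r c (\<rho> z)) ` topspace Z \<subseteq> extensional {1..r}" by (auto simp: translate_rep_def)
  fix k assume k: "k \<in> {1..r}"
  have "c k \<in> topspace X" using c k topological_group_carrier[OF tg] by auto
  moreover have "continuous_map Z X (\<lambda>z. \<rho> z k)"
    using continuous_map_compose[OF \<rho> continuous_map_product_projection[OF k]] by (simp add: o_def)
  ultimately have "continuous_map Z X (\<lambda>z. c k \<otimes>\<^bsub>G\<^esub> \<rho> z k)"
    by (intro continuous_map_group_mult[OF tg]) (auto simp: continuous_map_const)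
  then show "continuous_map Z X (\<lambda>z. translate_rep G r c (\<rho> z) k)" using k by (simp add: translate_rep_def)
qed

locale hom_space_covering =
  fixes X :: "'g topology" and G :: "'g monoid" and Xt :: "'h topology" and Gt :: "'h monoid"
    and p :: "'h \<Rightarrow> 'g" and r :: nat and R :: "word set"
  assumes tgX: "topological_group X G" and G_conn: "connected_space X"
    and tgXt: "topological_group Xt Gt"
    and p_hom: "p \<in> hom Gt G" and p_cov: "covering_map Xt X p"
    and R_gens: "\<forall>w\<in>R. \<forall>(i, b)\<in>set w. i \<in> {1..r}"
    and R_canc: "\<forall>w\<in>R. exponent_canceling_word w"
    and Hom_sc: "simply_connected_space (hom_space Xt Gt r R)"
begin

abbreviation "PX \<equiv> product_topology (\<lambda>k. X) {1..r}"
abbreviation "PXt \<equiv> product_topology (\<lambda>k. Xt) {1..r}"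
abbreviation "HS \<equiv> hom_space X G r R"
abbreviation "HSt \<equiv> hom_space Xt Gt r R"
abbreviation "H0 \<equiv> hom0_space X G r R"
abbreviation "triv \<equiv> trivial_rep G r"
abbreviation "trivt \<equiv> trivial_rep Gt r"

definition p_rep :: "(nat \<Rightarrow> 'h) \<Rightarrow> nat \<Rightarrow> 'g" where
  "p_rep \<rho> = (\<lambda>k\<in>{1..r}. p (\<rho> k))"

lemma group_G: "group G" using tgX by (rule topological_group_group)
lemma group_Gt: "group Gt" using tgXt by (rule topological_group_group)
lemma carrier_G: "carrier G = topspace X" using tgX by (rule topological_group_carrier)
lemma carrier_Gt: "carrier Gt = topspace Xt" using tgXt by (rule topological_group_carrier)

lemma p_one: "p \<one>\<^bsub>Gt\<^esub> = \<one>\<^bsub>G\<^esub>" using hom_one[OF p_hom group_Gt group_G] .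

lemma p_mult: "x \<in> carrier Gt \<Longrightarrow> y \<in> carrier Gt \<Longrightarrow> p (x \<otimes>\<^bsub>Gt\<^esub> y) = p x \<otimes>\<^bsub>G\<^esub> p y"
  using hom_mult[OF p_hom] .

lemma p_carrier: "x \<in> carrier Gt \<Longrightarrow> p x \<in> carrier G"
  using p_hom by (auto simp: hom_def)

lemma letter_index: "w \<in> R \<Longrightarrow> (i, b) \<in> set w \<Longrightarrow> i \<in> {1..r}"
  using R_gens by fastforce

lemma topspace_hom_space: "topspace HS = hom_set G r R"
proof -
  have "hom_set G r R \<subseteq> topspace PX" by (auto simp: hom_set_def carrier_G)
  then show ?thesis by (simp add: hom_space_def Int_absorb1)
qed

lemma trivial_rep_in_hom_set: "triv \<in> hom_set G r R"
proof -
  have "word_eval G triv w = \<one>\<^bsub>G\<^esub>" if "w \<in> R" for w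
    by (rule word_eval_ones[OF group_G]) (use letter_index[OF that] in \<open>auto simp: trivial_rep_def\<close>)
  moreover have "triv \<in> (\<Pi>\<^sub>E k\<in>{1..r}. carrier G)"
    using group_G by (auto simp: trivial_rep_def group.is_monoid monoid.one_closed)
  ultimately show ?thesis by (simp add: hom_set_def)
qed

lemma trivial_rep_cover_in_hom_set: "trivt \<in> hom_set Gt r R"
proof -
  have "word_eval Gt trivt w = \<one>\<^bsub>Gt\<^esub>" if "w \<in> R" for w
    by (rule word_eval_ones[OF group_Gt]) (use letter_index[OF that] in \<open>auto simp: trivial_rep_def\<close>)
  moreover have "trivt \<in> (\<Pi>\<^sub>E k\<in>{1..r}. carrier Gt)"
    using group_Gt by (auto simp: trivial_rep_def group.is_monoid monoid.one_closed)
  ultimately show ?thesis by (simp add: hom_set_def)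
qed

lemma p_rep_trivial: "p_rep trivt = triv"
  by (auto simp: p_rep_def trivial_rep_def p_one)

lemma p_rep_path_join: "p_rep (path_join A B t) = path_join (\<lambda>t. p_rep (A t)) (\<lambda>t. p_rep (B t)) t"
  by (simp add: path_join_def)

lemma p_rep_continuous: "continuous_map PXt PX p_rep"
proof -
  have "continuous_map PXt X (\<lambda>\<rho>. p (\<rho> k))" if "k \<in> {1..r}" for k
    using continuous_map_compose[OF continuous_map_product_projection[OF that]
        covering_map_continuous[OF p_cov]]
    by (simp add: o_def)
  then show ?thesis unfolding p_rep_def by (auto simp: continuous_map_componentwise)
qed

lemma p_word_eval:
  assumes "\<rho> \<in> (\<Pi>\<^sub>E k\<in>{1..r}. carrier Gt)" "w \<in> R"
  shows "p (word_eval Gt \<rho> w) = word_eval G (p_rep \<rho>) w"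
proof -
  have "p (word_eval Gt \<rho> w) = word_eval G (\<lambda>i. p (\<rho> i)) w"
    by (rule word_eval_hom[OF group_Gt group_G p_hom]) (use assms letter_index in auto)
  also have "\<dots> = word_eval G (p_rep \<rho>) w"
    by (rule word_eval_cong) (use letter_index[OF assms(2)] in \<open>auto simp: p_rep_def\<close>)
  finally show ?thesis .
qed

lemma p_rep_hom_set: assumes "\<rho> \<in> hom_set Gt r R" shows "p_rep \<rho> \<in> hom_set G r R"
proof -
  have c: "\<rho> \<in> (\<Pi>\<^sub>E k\<in>{1..r}. carrier Gt)" and wr: "\<And>w. w \<in> R \<Longrightarrow> word_eval Gt \<rho> w = \<one>\<^bsub>Gt\<^esub>"
    using assms by (auto simp: hom_set_def)
  have "p_rep \<rho> \<in> (\<Pi>\<^sub>E k\<in>{1..r}. carrier G)" using c p_carrier by (auto simp: p_rep_def)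
  moreover have "word_eval G (p_rep \<rho>) w = \<one>\<^bsub>G\<^esub>" if "w \<in> R" for w
    using p_word_eval[OF c that] wr[OF that] p_one by simp
  ultimately show ?thesis by (simp add: hom_set_def)
qed

lemma p_rep_continuous_hom_space: "continuous_map HSt HS p_rep"
proof -
  have "hom_set Gt r R \<subseteq> topspace PXt" by (auto simp: hom_set_def carrier_Gt)
  then have "p_rep \<in> topspace HSt \<rightarrow> hom_set G r R"
    using p_rep_hom_set by (auto simp: hom_space_def Int_absorb1)
  moreover have "continuous_map HSt PX p_rep"
    unfolding hom_space_def by (rule continuous_map_from_subtopology[OF p_rep_continuous])
  ultimately show ?thesis unfolding hom_space_def by (intro continuous_map_into_subtopology)
qed

lemma p_rep_translate_rep:
  assumes c: "c \<in> (\<Pi>\<^sub>E k\<in>{1..r}. carrier Gt)" "\<And>k. k \<in> {1..r} \<Longrightarrow> p (c k) = \<one>\<^bsub>G\<^esub>"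
    and \<rho>: "\<rho> \<in> (\<Pi>\<^sub>E k\<in>{1..r}. carrier Gt)"
  shows "p_rep (translate_rep Gt r c \<rho>) = p_rep \<rho>"
proof -
  have "p (c k \<otimes>\<^bsub>Gt\<^esub> \<rho> k) = p (\<rho> k)" if k: "k \<in> {1..r}" for k
  proof -
    have "p (c k \<otimes>\<^bsub>Gt\<^esub> \<rho> k) = p (c k) \<otimes>\<^bsub>G\<^esub> p (\<rho> k)" using c(1) \<rho> k by (intro p_mult) auto
    also have "\<dots> = p (\<rho> k)" using c(2)[OF k] p_carrier[of "\<rho> k"] \<rho> k group_G
      by (simp add: group.is_monoid monoid.l_one PiE_iff)
    finally show ?thesis .
  qed
  then show ?thesis by (auto simp: p_rep_def translate_rep_def)
qed

lemma topspace_hom0: "topspace H0 = connected_component_of_set HS triv"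
  using connected_component_of_subset_topspace by (fastforce simp: hom0_space_def)

lemma hom0_in_hom_set: "\<rho> \<in> topspace H0 \<Longrightarrow> \<rho> \<in> hom_set G r R"
  using connected_component_of_subset_topspace topspace_hom_space topspace_hom0 by fastforce

lemma trivial_rep_in_hom0: "triv \<in> topspace H0"
  unfolding topspace_hom0 using trivial_rep_in_hom_set topspace_hom_space
  by (simp add: connected_component_of_refl)

lemma continuous_map_into_hom0:
  assumes f: "continuous_map Z HS f" and Z: "connected_space Z"
    and z0: "z0 \<in> topspace Z" and fz0: "f z0 = triv"
  shows "continuous_map Z H0 f"
proof -
  have "connectedin HS (f ` topspace Z)"
    by (rule connectedin_continuous_map_image[OF f]) (use Z in \<open>simp add: connectedin_topspace\<close>)
  then have "f ` topspace Z \<subseteq> connected_component_of_set HS triv"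
    by (rule connected_component_of_maximal) (use z0 fz0 in force)
  then show ?thesis unfolding hom0_space_def using f by (intro continuous_map_into_subtopology) auto
qed

lemma continuous_map_hom0_component:
  assumes "k \<in> {1..r}" shows "continuous_map H0 X (\<lambda>\<rho>. \<rho> k)"
proof -
  have "continuous_map H0 PX id"
    unfolding hom0_space_def hom_space_def
    by (intro continuous_map_from_subtopology continuous_map_id)
  from continuous_map_compose[OF this continuous_map_product_projection[OF assms]] show ?thesis
    by (simp add: o_def)
qed

lemma factor_incl_in_hom_set:
  assumes "g \<in> carrier G" shows "factor_incl G r k g \<in> hom_set G r R"
proof -
  have "factor_incl G r k g \<in> (\<Pi>\<^sub>E j\<in>{1..r}. carrier G)"
    using assms group_G by (auto simp: factor_incl_def group.is_monoid monoid.one_closed)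
  moreover have "word_eval G (factor_incl G r k g) w = \<one>\<^bsub>G\<^esub>" if "w \<in> R" for w
    by (rule word_eval_factor_incl[OF group_G assms]) (use letter_index[OF that] R_canc that in auto)
  ultimately show ?thesis by (simp add: hom_set_def)
qed

lemma factor_incl_one: "factor_incl G r k \<one>\<^bsub>G\<^esub> = triv"
  by (auto simp: factor_incl_def trivial_rep_def)

lemma continuous_map_factor_incl: "continuous_map X H0 (factor_incl G r k)"
proof (rule continuous_map_into_hom0)
  have "continuous_map X PX (factor_incl G r k)"
    using continuous_map_factor_incl_product[OF tgX continuous_map_id] by (simp add: id_def)
  then show "continuous_map X HS (factor_incl G r k)"
    unfolding hom_space_def using factor_incl_in_hom_set carrier_G
    by (intro continuous_map_into_subtopology) auto
  show "\<one>\<^bsub>G\<^esub> \<in> topspace X" by (rule topological_group_one[OF tgX])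
qed (use G_conn factor_incl_one in auto)

lemma factor_incl_loop:
  assumes "g \<in> loops X \<one>\<^bsub>G\<^esub>" shows "(\<lambda>t. factor_incl G r k (g t)) \<in> loops H0 triv"
  using loops_compose[OF assms continuous_map_factor_incl[of k]] factor_incl_one by (simp add: o_def)

lemma factor_loop_concat_loop:
  assumes f: "\<And>k. k \<in> {1..r} \<Longrightarrow> f k \<in> loops X \<one>\<^bsub>G\<^esub>" and n: "n \<le> r"
  shows "factor_loop_concat G r f n \<in> loops H0 triv"
  using n
proof (induction n)
  case 0 then show ?case using trivial_rep_in_hom0 by (simp add: const_loop)
next
  case (Suc n)
  then have "Suc n \<in> {1..r}" by auto
  then show ?case using Suc by (simp add: path_join_loops factor_incl_loop f)
qed

lemma lift_in_hom_space:
  assumes c: "continuous_map I01 PXt \<gamma>" and g0: "\<gamma> 0 = trivt"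
    and hs: "\<And>t. t \<in> {0..1} \<Longrightarrow> p_rep (\<gamma> t) \<in> hom_set G r R"
  shows "continuous_map I01 HSt \<gamma>"
proof -
  have car: "\<gamma> t \<in> (\<Pi>\<^sub>E k\<in>{1..r}. carrier Gt)" if "t \<in> {0..1}" for t
    using c that carrier_Gt by (auto simp: continuous_map_def)
  have "word_eval Gt (\<gamma> t) w = \<one>\<^bsub>Gt\<^esub>" if t: "t \<in> {0..1}" and w: "w \<in> R" for t w
  proof -
    have "continuous_map I01 Xt (\<lambda>t. word_eval Gt (\<gamma> t) w)"
      using continuous_map_compose[OF c continuous_map_word_eval[OF tgXt letter_index[OF w]]]
      by (simp add: o_def)
    moreover have "p (word_eval Gt (\<gamma> s) w) = \<one>\<^bsub>G\<^esub>" if "s \<in> topspace I01" for s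
      using p_word_eval[OF car w] hs w that by (simp add: hom_set_def)
    ultimately have "word_eval Gt (\<gamma> t) w = word_eval Gt (\<gamma> 0) w"
      by (rule covering_map_fibrewise_constant[OF p_cov connected_space_I01]) (use t in auto)
    also have "\<dots> = \<one>\<^bsub>Gt\<^esub>" using g0 trivial_rep_cover_in_hom_set w by (simp add: hom_set_def)
    finally show ?thesis .
  qed
  then have "\<gamma> t \<in> hom_set Gt r R" if "t \<in> {0..1}" for t using car that by (simp add: hom_set_def)
  then show ?thesis unfolding hom_space_def using c by (intro continuous_map_into_subtopology) auto
qed

definition is_lift :: "(real \<Rightarrow> nat \<Rightarrow> 'h) \<Rightarrow> (real \<Rightarrow> nat \<Rightarrow> 'g) \<Rightarrow> bool" where
  "is_lift a \<alpha> \<longleftrightarrow> continuous_map I01 PXt a \<and> a 0 = trivt \<and> (\<forall>t\<in>{0..1}. p_rep (a t) = \<alpha> t)"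

lemma loop_homotopic_by_lifts:
  assumes \<alpha>: "\<alpha> \<in> loops H0 triv" and \<beta>: "\<beta> \<in> loops H0 triv"
    and a: "is_lift a \<alpha>" and b: "is_lift b \<beta>" and ab: "a 1 = b 1"
  shows "loop_homotopic H0 triv \<alpha> \<beta>"
proof -
  have in_hom: "\<gamma> t \<in> hom_set G r R" if "\<gamma> \<in> loops H0 triv" "t \<in> {0..1}" for \<gamma> t
    using that hom0_in_hom_set by (auto simp: loops_def pathin_def continuous_map_def Pi_iff)
  have "pathin HSt a" "pathin HSt b"
    using a b in_hom[OF \<alpha>] in_hom[OF \<beta>] unfolding pathin_def is_lift_def
    by (auto intro!: lift_in_hom_space)
  then have "homotopic_with (\<lambda>h. h 0 = a 0 \<and> h 1 = a 1) I01 HSt a b"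
    using a b ab by (intro simply_connected_homotopic_paths[OF Hom_sc]) (auto simp: is_lift_def)
  then obtain K :: "real \<times> real \<Rightarrow> nat \<Rightarrow> 'h" where
    K: "continuous_map (top_of_set ({0..1} \<times> {0..1})) HSt K"
    "\<And>t. K (0, t) = a t" "\<And>t. K (1, t) = b t"
    "\<And>s. s \<in> {0..1} \<Longrightarrow> K (s, 0) = a 0" "\<And>s. s \<in> {0..1} \<Longrightarrow> K (s, 1) = a 1"
    by (rule homotopic_with_endpointsE) blast
  have a01: "p_rep (a 0) = triv" "p_rep (a 1) = triv"
    using a \<alpha> by (auto simp: is_lift_def loops_def p_rep_trivial)
  have "continuous_map (top_of_set ({0..1} \<times> {0..1})) HS (\<lambda>z. p_rep (K z))"
    using continuous_map_compose[OF K(1) p_rep_continuous_hom_space] by (simp add: o_def)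
  then have H: "continuous_map (top_of_set ({0..1} \<times> {0..1})) H0 (\<lambda>z. p_rep (K z))"
    by (rule continuous_map_into_hom0[of _ _ "(0, 0)", OF _ connected_space_unit_square])
       (use K(2) a01 in auto)
  show ?thesis unfolding loop_homotopic_def
  proof (intro conjI \<alpha> \<beta> homotopic_with_from_square[OF H])
    fix t :: real assume t: "t \<in> {0..1}"
    show "p_rep (K (0, t)) = \<alpha> t" using K(2) a t by (simp add: is_lift_def)
    show "p_rep (K (1, t)) = \<beta> t" using K(3) b t by (simp add: is_lift_def)
  next
    fix s :: real assume "s \<in> {0..1}"
    then show "p_rep (K (s, 0)) = triv" "p_rep (K (s, 1)) = triv" using K(4,5) a01 by simp_all
  qed (use \<alpha> \<beta> in \<open>auto simp: loops_def\<close>)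
qed

lemma is_lift_path_join:
  assumes a: "is_lift a \<alpha>" and b: "is_lift b \<beta>" and \<alpha>1: "\<alpha> 1 = triv"
  shows "is_lift (path_join a (\<lambda>t. translate_rep Gt r (a 1) (b t))) (path_join \<alpha> \<beta>)"
proof -
  have in_carrier: "c t \<in> (\<Pi>\<^sub>E k\<in>{1..r}. carrier Gt)" if "continuous_map I01 PXt c" "t \<in> {0..1}" for c t
    using that carrier_Gt by (auto simp: continuous_map_def)
  have c: "a 1 \<in> (\<Pi>\<^sub>E k\<in>{1..r}. carrier Gt)" using a in_carrier by (simp add: is_lift_def)
  have c1: "p (a 1 k) = \<one>\<^bsub>G\<^esub>" if "k \<in> {1..r}" for k
  proof -
    have "p_rep (a 1) k = triv k" using a \<alpha>1 by (simp add: is_lift_def)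
    then show ?thesis using that by (simp add: p_rep_def trivial_rep_def)
  qed
  have "continuous_map I01 PXt (\<lambda>t. translate_rep Gt r (a 1) (b t))"
    by (rule continuous_map_translate_rep[OF tgXt c]) (use b in \<open>simp add: is_lift_def\<close>)
  moreover have "a 1 = translate_rep Gt r (a 1) (b 0)"
    using b translate_rep_trivial[OF group_Gt c] by (simp add: is_lift_def)
  ultimately have "pathin PXt (path_join a (\<lambda>t. translate_rep Gt r (a 1) (b t)))"
    using a by (intro pathin_path_join) (auto simp: pathin_def is_lift_def)
  moreover have "p_rep (translate_rep Gt r (a 1) (b t)) = \<beta> t" if "t \<in> {0..1}" for t
    using p_rep_translate_rep[OF c c1 in_carrier[of b t]] b that by (simp add: is_lift_def)
  then have "p_rep (path_join a (\<lambda>t. translate_rep Gt r (a 1) (b t)) t) = path_join \<alpha> \<beta> t"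
    if "t \<in> {0..1}" for t
    using path_join_cong[OF _ _ that, of "\<lambda>t. p_rep (a t)" \<alpha>] a by (simp add: is_lift_def p_rep_path_join)
  ultimately show ?thesis using a by (simp add: is_lift_def pathin_def path_join_def)
qed

lemma is_lift_factor_incl:
  assumes "pathin Xt \<gamma>" "\<gamma> 0 = \<one>\<^bsub>Gt\<^esub>" "\<And>t. t \<in> {0..1} \<Longrightarrow> p (\<gamma> t) = g t"
  shows "is_lift (\<lambda>t. factor_incl Gt r k (\<gamma> t)) (\<lambda>t. factor_incl G r k (g t))"
  unfolding is_lift_def
proof (intro conjI ballI)
  show "continuous_map I01 PXt (\<lambda>t. factor_incl Gt r k (\<gamma> t))"
    using continuous_map_factor_incl_product[OF tgXt] assms(1) by (simp add: pathin_def)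
  show "factor_incl Gt r k (\<gamma> 0) = trivt" using assms(2) by (auto simp: factor_incl_def trivial_rep_def)
  fix t :: real assume "t \<in> {0..1}"
  then show "p_rep (factor_incl Gt r k (\<gamma> t)) = factor_incl G r k (g t)"
    using assms(3) p_one by (auto simp: p_rep_def factor_incl_def)
qed

lemma factor_lift_concat_is_lift:
  assumes f: "\<And>k. k \<in> {1..r} \<Longrightarrow> f k \<in> loops X \<one>\<^bsub>G\<^esub>"
    and ft: "\<And>k. k \<in> {1..r} \<Longrightarrow> pathin Xt (ft k)" "\<And>k. k \<in> {1..r} \<Longrightarrow> ft k 0 = \<one>\<^bsub>Gt\<^esub>"
      "\<And>k t. k \<in> {1..r} \<Longrightarrow> t \<in> {0..1} \<Longrightarrow> p (ft k t) = f k t"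
    and n: "n \<le> r"
  shows "is_lift (factor_lift_concat Gt r ft n) (factor_loop_concat G r f n) \<and>
         factor_lift_concat Gt r ft n 1 = lift_ends Gt r ft n"
  using n
proof (induction n)
  case 0
  have "continuous_map I01 PXt (\<lambda>t. trivt)"
    using trivial_rep_cover_in_hom_set carrier_Gt by (auto simp: hom_set_def)
  moreover have "trivt = lift_ends Gt r ft 0" by (auto simp: trivial_rep_def lift_ends_def)
  ultimately show ?case using p_rep_trivial by (simp add: is_lift_def)
next
  case (Suc n)
  then have k: "Suc n \<in> {1..r}"
    and IH: "is_lift (factor_lift_concat Gt r ft n) (factor_loop_concat G r f n)"
      "factor_lift_concat Gt r ft n 1 = lift_ends Gt r ft n" by auto
  have "factor_loop_concat G r f n 1 = triv"
    using factor_loop_concat_loop[OF f] Suc.prems by (simp add: loops_def)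
  note step = is_lift_path_join[OF IH(1) is_lift_factor_incl[OF ft(1-2)[OF k] ft(3)[OF k]] this]
  have "ft j 1 \<in> carrier Gt" if "j \<in> {1..r}" for j
    using ft(1)[OF that] carrier_Gt by (simp add: path_finish_in_topspace)
  then have "factor_lift_concat Gt r ft (Suc n) 1 = lift_ends Gt r ft (Suc n)"
    using translate_rep_lift_ends[OF group_Gt _ k] IH(2) by (simp add: path_join_def)
  then show ?case using step by simp
qed

lemma factor_loop_concat_component:
  assumes f: "\<And>k. k \<in> {1..r} \<Longrightarrow> f k \<in> loops X \<one>\<^bsub>G\<^esub>" and k: "k \<in> {1..r}" and n: "n \<le> r"
  shows "loop_homotopic X \<one>\<^bsub>G\<^esub> (\<lambda>t. factor_loop_concat G r f n t k)
           (if k \<le> n then f k else (\<lambda>t. \<one>\<^bsub>G\<^esub>))"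
  using n
proof (induction n)
  case 0
  have "(\<lambda>t. factor_loop_concat G r f 0 t k) = (\<lambda>t. \<one>\<^bsub>G\<^esub>)" using k by (simp add: trivial_rep_def)
  then show ?case using k topological_group_one[OF tgX] by (simp add: loop_homotopic_refl const_loop)
next
  case (Suc n)
  let ?e = "\<lambda>t. \<one>\<^bsub>G\<^esub>"
  have e: "?e \<in> loops X \<one>\<^bsub>G\<^esub>" using topological_group_one[OF tgX] by (simp add: const_loop)
  have "(\<lambda>t. factor_loop_concat G r f (Suc n) t k)
        = path_join (\<lambda>t. factor_loop_concat G r f n t k) (if k = Suc n then f k else ?e)"
    using k by (auto simp: path_join_def factor_incl_def)
  moreover have "loop_homotopic X \<one>\<^bsub>G\<^esub> (if k = Suc n then f k else ?e) (if k = Suc n then f k else ?e)"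
    using f[OF k] e by (auto intro: loop_homotopic_refl)
  ultimately have "loop_homotopic X \<one>\<^bsub>G\<^esub> (\<lambda>t. factor_loop_concat G r f (Suc n) t k)
      (path_join (if k \<le> n then f k else ?e) (if k = Suc n then f k else ?e))"
    using loop_homotopic_path_join Suc by auto
  moreover have "loop_homotopic X \<one>\<^bsub>G\<^esub> (path_join (if k \<le> n then f k else ?e) (if k = Suc n then f k else ?e))
      (if k \<le> Suc n then f k else ?e)"
    using loop_homotopic_join_const_left[OF f[OF k]] loop_homotopic_join_const_right[OF f[OF k]]
      loop_homotopic_join_const_right[OF e]
    by (cases "k \<le> n"; cases "k = Suc n") auto
  ultimately show ?case by (rule loop_homotopic_trans)
qed

lemma ordprod_induced_factor_incl:
  assumes f: "\<And>k. k \<in> {1..r} \<Longrightarrow> f k \<in> loops X \<one>\<^bsub>G\<^esub>"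
    and a: "\<And>k. k \<in> {1..r} \<Longrightarrow> a k = loop_class X \<one>\<^bsub>G\<^esub> (f k)" and n: "n \<le> r"
  shows "ordprod (fundamental_group H0 triv) (\<lambda>k. induced_pi1 H0 triv (factor_incl G r k) (a k)) n
     = loop_class H0 triv (factor_loop_concat G r f n)"
  using n
proof (induction n)
  case 0 then show ?case by (simp add: fundamental_group_one)
next
  case (Suc n)
  then have k: "Suc n \<in> {1..r}" by auto
  have "induced_pi1 H0 triv (factor_incl G r (Suc n)) (a (Suc n))
      = loop_class H0 triv (\<lambda>t. factor_incl G r (Suc n) (f (Suc n) t))"
    using induced_pi1_loop_class[OF continuous_map_factor_incl f[OF k]] a[OF k] factor_incl_one
    by (simp add: o_def)
  then show ?case
    using Suc fundamental_group_mult_class[OF factor_loop_concat_loop[OF f] factor_incl_loop[OF f[OF k]]]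
    by simp
qed

lemma loop_lift_exists:
  assumes "g \<in> loops X \<one>\<^bsub>G\<^esub>"
  shows "\<exists>h. pathin Xt h \<and> h 0 = \<one>\<^bsub>Gt\<^esub> \<and> (\<forall>t\<in>{0..1}. p (h t) = g t)"
  by (rule covering_map_path_lift[OF p_cov])
     (use assms topological_group_one[OF tgXt] p_one in \<open>auto simp: loops_def\<close>)

definition loop_lift :: "(real \<Rightarrow> 'g) \<Rightarrow> real \<Rightarrow> 'h" where
  "loop_lift g = (SOME h. pathin Xt h \<and> h 0 = \<one>\<^bsub>Gt\<^esub> \<and> (\<forall>t\<in>{0..1}. p (h t) = g t))"

lemma loop_lift_props:
  assumes "g \<in> loops X \<one>\<^bsub>G\<^esub>"
  shows "pathin Xt (loop_lift g)" "loop_lift g 0 = \<one>\<^bsub>Gt\<^esub>"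
    "\<And>t. t \<in> {0..1} \<Longrightarrow> p (loop_lift g t) = g t"
  using someI_ex[OF loop_lift_exists[OF assms]] unfolding loop_lift_def by auto

lemma loop_lift_end:
  assumes "g \<in> loops X \<one>\<^bsub>G\<^esub>"
  shows "p (loop_lift g 1) = \<one>\<^bsub>G\<^esub>" "loop_lift g 1 \<in> carrier Gt"
  using loop_lift_props[OF assms] assms carrier_Gt by (auto simp: loops_def path_finish_in_topspace)

lemma loop_lift_path_join:
  assumes f: "f \<in> loops X \<one>\<^bsub>G\<^esub>" and g: "g \<in> loops X \<one>\<^bsub>G\<^esub>"
  defines "h \<equiv> path_join (loop_lift f) (\<lambda>t. loop_lift f 1 \<otimes>\<^bsub>Gt\<^esub> loop_lift g t)"
  shows "pathin Xt h" "h 0 = \<one>\<^bsub>Gt\<^esub>" "\<And>t. t \<in> {0..1} \<Longrightarrow> p (h t) = path_join f g t"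
    "h 1 = loop_lift f 1 \<otimes>\<^bsub>Gt\<^esub> loop_lift g 1"
proof -
  note c = loop_lift_end[OF f]
  have pg: "pathin Xt (\<lambda>t. loop_lift f 1 \<otimes>\<^bsub>Gt\<^esub> loop_lift g t)"
    unfolding pathin_def
    by (rule continuous_map_group_mult[OF tgXt])
       (use c carrier_Gt loop_lift_props(1)[OF g] in \<open>simp_all add: pathin_def\<close>)
  show "pathin Xt h" unfolding h_def
    by (rule pathin_path_join[OF loop_lift_props(1)[OF f] pg])
       (use loop_lift_props(2)[OF g] c group_Gt in \<open>simp add: group.is_monoid monoid.r_one\<close>)
  show "h 0 = \<one>\<^bsub>Gt\<^esub>" using loop_lift_props(2)[OF f] by (simp add: h_def path_join_def)
  show "h 1 = loop_lift f 1 \<otimes>\<^bsub>Gt\<^esub> loop_lift g 1" by (simp add: h_def path_join_def)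
  have second: "p (loop_lift f 1 \<otimes>\<^bsub>Gt\<^esub> loop_lift g t) = g t" if "t \<in> {0..1}" for t
  proof -
    have "loop_lift g t \<in> carrier Gt"
      using loop_lift_props(1)[OF g] that carrier_Gt by (auto simp: pathin_def continuous_map_def)
    then show ?thesis using p_mult[OF c(2)] c(1) p_carrier group_G loop_lift_props(3)[OF g that]
      by (simp add: group.is_monoid monoid.l_one)
  qed
  show "p (h t) = path_join f g t" if "t \<in> {0..1}" for t
  proof -
    have "p (h t) = path_join (\<lambda>t. p (loop_lift f t)) (\<lambda>t. p (loop_lift f 1 \<otimes>\<^bsub>Gt\<^esub> loop_lift g t)) t"
      by (simp add: h_def path_join_def)
    also have "\<dots> = path_join f g t"
      by (rule path_join_cong[OF _ _ that]) (use second loop_lift_props(3)[OF f] in auto)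
    finally show ?thesis .
  qed
qed

lemma factor_lift_concat_loop_lift:
  assumes f: "\<And>k. k \<in> {1..r} \<Longrightarrow> f k \<in> loops X \<one>\<^bsub>G\<^esub>"
  shows "is_lift (factor_lift_concat Gt r (\<lambda>k. loop_lift (f k)) r) (factor_loop_concat G r f r)"
    "factor_lift_concat Gt r (\<lambda>k. loop_lift (f k)) r 1 = lift_ends Gt r (\<lambda>k. loop_lift (f k)) r"
  using factor_lift_concat_is_lift[OF f _ _ _ order_refl] loop_lift_props[OF f] by auto

text \<open>Both sides lift to paths ending at the tuple of products of the endpoints of the lifts of
  \<open>f k\<close> and \<open>g k\<close>.\<close>
lemma factor_loop_concat_path_join:
  assumes f: "\<And>k. k \<in> {1..r} \<Longrightarrow> f k \<in> loops X \<one>\<^bsub>G\<^esub>"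
    and g: "\<And>k. k \<in> {1..r} \<Longrightarrow> g k \<in> loops X \<one>\<^bsub>G\<^esub>"
  shows "loop_homotopic H0 triv (factor_loop_concat G r (\<lambda>k. path_join (f k) (g k)) r)
           (path_join (factor_loop_concat G r f r) (factor_loop_concat G r g r))"
proof -
  let ?lf = "factor_lift_concat Gt r (\<lambda>k. loop_lift (f k)) r"
  let ?lg = "factor_lift_concat Gt r (\<lambda>k. loop_lift (g k)) r"
  define ht where "ht k = path_join (loop_lift (f k)) (\<lambda>t. loop_lift (f k) 1 \<otimes>\<^bsub>Gt\<^esub> loop_lift (g k) t)" for k
  have h: "\<And>k. k \<in> {1..r} \<Longrightarrow> path_join (f k) (g k) \<in> loops X \<one>\<^bsub>G\<^esub>"
    using f g by (simp add: path_join_loops)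
  have lh: "is_lift (factor_lift_concat Gt r ht r) (factor_loop_concat G r (\<lambda>k. path_join (f k) (g k)) r)
       \<and> factor_lift_concat Gt r ht r 1 = lift_ends Gt r ht r"
    by (rule factor_lift_concat_is_lift[OF h]) (use loop_lift_path_join[OF f g] in \<open>auto simp: ht_def\<close>)
  have "factor_loop_concat G r f r 1 = triv"
    using factor_loop_concat_loop[OF f order_refl] by (simp add: loops_def)
  note lfg = is_lift_path_join[OF factor_lift_concat_loop_lift(1)[OF f]
      factor_lift_concat_loop_lift(1)[OF g] this]
  have "lift_ends Gt r ht r =
      translate_rep Gt r (lift_ends Gt r (\<lambda>k. loop_lift (f k)) r) (lift_ends Gt r (\<lambda>k. loop_lift (g k)) r)"
    using loop_lift_path_join(4)[OF f g] by (auto simp: lift_ends_def ht_def translate_rep_def)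
  then have ends: "factor_lift_concat Gt r ht r 1 = path_join ?lf (\<lambda>t. translate_rep Gt r (?lf 1) (?lg t)) 1"
    using lh factor_lift_concat_loop_lift(2)[OF f] factor_lift_concat_loop_lift(2)[OF g]
    by (simp add: path_join_def)
  show ?thesis
    using loop_homotopic_by_lifts[OF factor_loop_concat_loop[OF h order_refl]
        path_join_loops[OF factor_loop_concat_loop[OF f order_refl] factor_loop_concat_loop[OF g order_refl]]
        conjunct1[OF lh] lfg ends] .
qed

abbreviation "FG \<equiv> fundamental_group H0 triv"
abbreviation "Pi1 \<equiv> product_group {1..r} (\<lambda>k. fundamental_group X \<one>\<^bsub>G\<^esub>)"

definition factor_product :: "(nat \<Rightarrow> (real \<Rightarrow> 'g) set) \<Rightarrow> (real \<Rightarrow> nat \<Rightarrow> 'g) set" where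
  "factor_product a = ordprod FG (\<lambda>k. induced_pi1 H0 triv (factor_incl G r k) (a k)) r"

definition loop_rep :: "(nat \<Rightarrow> (real \<Rightarrow> 'g) set) \<Rightarrow> nat \<Rightarrow> real \<Rightarrow> 'g" where
  "loop_rep a k = (SOME f. f \<in> loops X \<one>\<^bsub>G\<^esub> \<and> a k = loop_class X \<one>\<^bsub>G\<^esub> f)"

lemma loop_rep_props:
  assumes "a \<in> carrier Pi1" "k \<in> {1..r}"
  shows "loop_rep a k \<in> loops X \<one>\<^bsub>G\<^esub>" "a k = loop_class X \<one>\<^bsub>G\<^esub> (loop_rep a k)"
proof -
  have "a k \<in> carrier (fundamental_group X \<one>\<^bsub>G\<^esub>)" using assms by auto
  then have "\<exists>f. f \<in> loops X \<one>\<^bsub>G\<^esub> \<and> a k = loop_class X \<one>\<^bsub>G\<^esub> f" by (auto simp: fundamental_group_def)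
  from someI_ex[OF this] show "loop_rep a k \<in> loops X \<one>\<^bsub>G\<^esub>" "a k = loop_class X \<one>\<^bsub>G\<^esub> (loop_rep a k)"
    unfolding loop_rep_def by auto
qed

lemma factor_product_loop_class:
  assumes "a \<in> carrier Pi1"
  shows "factor_product a = loop_class H0 triv (factor_loop_concat G r (loop_rep a) r)"
  unfolding factor_product_def by (rule ordprod_induced_factor_incl) (use loop_rep_props[OF assms] in auto)

lemma factor_product_in_carrier: "a \<in> carrier Pi1 \<Longrightarrow> factor_product a \<in> carrier FG"
  using factor_product_loop_class loop_class_in_carrier factor_loop_concat_loop loop_rep_props(1)
  by (metis order_refl)

lemma factor_product_surj:
  assumes \<gamma>: "\<gamma> \<in> loops H0 triv"
  shows "\<exists>a\<in>carrier Pi1. factor_product a = loop_class H0 triv \<gamma>"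
proof -
  define f where "f = (\<lambda>k t. \<gamma> t k)"
  have f: "f k \<in> loops X \<one>\<^bsub>G\<^esub>" if "k \<in> {1..r}" for k
    using loops_compose[OF \<gamma> continuous_map_hom0_component[OF that]] that
    by (simp add: o_def f_def trivial_rep_def)
  define a where "a = (\<lambda>k\<in>{1..r}. loop_class X \<one>\<^bsub>G\<^esub> (f k))"
  have a: "a \<in> carrier Pi1" using f by (auto simp: a_def loop_class_in_carrier)
  define \<gamma>' where "\<gamma>' = (\<lambda>t. \<lambda>k\<in>{1..r}. loop_lift (f k) t)"
  have lift: "is_lift \<gamma>' \<gamma>"
    unfolding is_lift_def \<gamma>'_def
  proof (intro conjI ballI)
    show "continuous_map I01 PXt (\<lambda>t. \<lambda>k\<in>{1..r}. loop_lift (f k) t)"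
      using loop_lift_props(1)[OF f] by (auto simp: continuous_map_componentwise pathin_def)
    show "(\<lambda>k\<in>{1..r}. loop_lift (f k) 0) = trivt"
      using loop_lift_props(2)[OF f] by (auto simp: trivial_rep_def)
    fix t :: real assume t: "t \<in> {0..1}"
    then have "\<gamma> t \<in> extensional {1..r}"
      using \<gamma> hom0_in_hom_set
      by (auto simp: loops_def pathin_def continuous_map_def hom_set_def PiE_def Pi_iff)
    then show "p_rep (\<lambda>k\<in>{1..r}. loop_lift (f k) t) = \<gamma> t"
      using loop_lift_props(3)[OF f t] by (auto simp: p_rep_def f_def extensional_def)
  qed
  have "factor_lift_concat Gt r (\<lambda>k. loop_lift (f k)) r 1 = \<gamma>' 1"
    using factor_lift_concat_loop_lift(2)[OF f] by (auto simp: lift_ends_def \<gamma>'_def)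
  from loop_homotopic_by_lifts[OF factor_loop_concat_loop[OF f order_refl] \<gamma>
      factor_lift_concat_loop_lift(1)[OF f] lift this]
  have "loop_homotopic H0 triv (factor_loop_concat G r f r) \<gamma>" .
  then have "loop_class H0 triv (factor_loop_concat G r f r) = loop_class H0 triv \<gamma>"
    using loop_class_eq[OF factor_loop_concat_loop[OF f order_refl] \<gamma>] by simp
  moreover have "factor_product a = loop_class H0 triv (factor_loop_concat G r f r)"
    unfolding factor_product_def by (rule ordprod_induced_factor_incl[OF f]) (auto simp: a_def)
  ultimately show ?thesis using a by blast
qed

lemma factor_product_inj:
  assumes a: "a \<in> carrier Pi1" and b: "b \<in> carrier Pi1"
    and eq: "factor_product a = factor_product b"
  shows "a = b"
proof (rule ext)
  fix k
  show "a k = b k"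
  proof (cases "k \<in> {1..r}")
    case False then show ?thesis using a b by (auto simp: PiE_def extensional_def)
  next
    case k: True
    have la: "\<And>k. k \<in> {1..r} \<Longrightarrow> loop_rep a k \<in> loops X \<one>\<^bsub>G\<^esub>"
      and lb: "\<And>k. k \<in> {1..r} \<Longrightarrow> loop_rep b k \<in> loops X \<one>\<^bsub>G\<^esub>"
      using loop_rep_props a b by auto
    have "loop_homotopic H0 triv (factor_loop_concat G r (loop_rep a) r)
        (factor_loop_concat G r (loop_rep b) r)"
      using eq factor_product_loop_class[OF a] factor_product_loop_class[OF b]
        loop_class_eq[OF factor_loop_concat_loop[OF la order_refl] factor_loop_concat_loop[OF lb order_refl]]
      by simp
    from loop_homotopic_compose[OF this continuous_map_hom0_component[OF k]]
    have "loop_homotopic X \<one>\<^bsub>G\<^esub> (\<lambda>t. factor_loop_concat G r (loop_rep a) r t k)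
        (\<lambda>t. factor_loop_concat G r (loop_rep b) r t k)"
      using k by (simp add: o_def trivial_rep_def)
    then have "loop_homotopic X \<one>\<^bsub>G\<^esub> (loop_rep a k) (loop_rep b k)"
      using factor_loop_concat_component[OF la k order_refl] factor_loop_concat_component[OF lb k order_refl] k
      by (simp add: o_def) (meson loop_homotopic_trans loop_homotopic_sym)
    then show ?thesis
      using loop_class_eq[OF la[OF k] lb[OF k]] loop_rep_props(2)[OF a k] loop_rep_props(2)[OF b k] by simp
  qed
qed

lemma factor_product_mult:
  assumes a: "a \<in> carrier Pi1" and b: "b \<in> carrier Pi1"
  shows "factor_product (a \<otimes>\<^bsub>Pi1\<^esub> b) = factor_product a \<otimes>\<^bsub>FG\<^esub> factor_product b"
proof -
  define f where "f = loop_rep a"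
  define g where "g = loop_rep b"
  have f: "\<And>k. k \<in> {1..r} \<Longrightarrow> f k \<in> loops X \<one>\<^bsub>G\<^esub>"
    and g: "\<And>k. k \<in> {1..r} \<Longrightarrow> g k \<in> loops X \<one>\<^bsub>G\<^esub>"
    using loop_rep_props(1) a b by (auto simp: f_def g_def)
  have h: "\<And>k. k \<in> {1..r} \<Longrightarrow> path_join (f k) (g k) \<in> loops X \<one>\<^bsub>G\<^esub>"
    using f g by (simp add: path_join_loops)
  have ab: "(a \<otimes>\<^bsub>Pi1\<^esub> b) k = loop_class X \<one>\<^bsub>G\<^esub> (path_join (f k) (g k))" if k: "k \<in> {1..r}" for k
    using k loop_rep_props(2)[OF a k] loop_rep_props(2)[OF b k] fundamental_group_mult_class[OF f[OF k] g[OF k]]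
    by (simp add: product_group_def f_def g_def)
  have "factor_product (a \<otimes>\<^bsub>Pi1\<^esub> b)
      = loop_class H0 triv (factor_loop_concat G r (\<lambda>k. path_join (f k) (g k)) r)"
    unfolding factor_product_def by (rule ordprod_induced_factor_incl[OF h ab order_refl])
  also have "\<dots> = loop_class H0 triv (path_join (factor_loop_concat G r f r) (factor_loop_concat G r g r))"
    using factor_loop_concat_path_join[OF f g]
      loop_class_eq[OF factor_loop_concat_loop[OF h order_refl]
        path_join_loops[OF factor_loop_concat_loop[OF f order_refl] factor_loop_concat_loop[OF g order_refl]]]
    by simp
  also have "\<dots> = factor_product a \<otimes>\<^bsub>FG\<^esub> factor_product b"
    using factor_product_loop_class[OF a] factor_product_loop_class[OF b]
      fundamental_group_mult_class[OF factor_loop_concat_loop[OF f order_refl]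
        factor_loop_concat_loop[OF g order_refl]]
    by (simp add: f_def g_def)
  finally show ?thesis .
qed

lemma factor_product_iso: "factor_product \<in> iso Pi1 FG"
proof -
  have "factor_product \<in> hom Pi1 FG"
    by (intro homI factor_product_in_carrier factor_product_mult)
  moreover have "inj_on factor_product (carrier Pi1)"
    by (rule inj_onI) (rule factor_product_inj)
  moreover have "carrier FG \<subseteq> factor_product ` carrier Pi1"
  proof
    fix x assume "x \<in> carrier FG"
    then obtain \<gamma> where \<gamma>: "\<gamma> \<in> loops H0 triv" "x = loop_class H0 triv \<gamma>"
      by (auto simp: fundamental_group_def)
    then obtain a where "a \<in> carrier Pi1" "factor_product a = x"
      using factor_product_surj by blast
    then show "x \<in> factor_product ` carrier Pi1" by blast
  qed
  then have "factor_product ` carrier Pi1 = carrier FG"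
    using factor_product_in_carrier by blast
  ultimately show ?thesis by (simp add: iso_def bij_betw_def)
qed

end

theorem lemma2p6:
  fixes X :: "'g topology" and G :: "'g monoid"
    and Xt :: "'h topology" and Gt :: "'h monoid"
    and p :: "'h \<Rightarrow> 'g"
    and r :: nat and R :: "word set"
  assumes G_lie: "lie_group X G" and G_conn: "connected_space X"
    and Gt_lie: "lie_group Xt Gt" and Gt_sc: "simply_connected_space Xt"
    and p_hom: "p \<in> hom Gt G" and p_cov: "covering_map Xt X p"
    and R_fin: "finite R"
    and R_gens: "\<forall>w\<in>R. \<forall>(i, b)\<in>set w. i \<in> {1..r}"
    and R_canc: "\<forall>w\<in>R. exponent_canceling_word w"
    and Hom_sc: "simply_connected_space (hom_space Xt Gt r R)"
  shows "(\<lambda>a. ordprod (fundamental_group (hom0_space X G r R) (trivial_rep G r))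
              (\<lambda>k. induced_pi1 (hom0_space X G r R) (trivial_rep G r) (factor_incl G r k) (a k)) r)
         \<in> iso (product_group {1..r} (\<lambda>k. fundamental_group X \<one>\<^bsub>G\<^esub>))
               (fundamental_group (hom0_space X G r R) (trivial_rep G r))"
proof -
  interpret hom_space_covering X G Xt Gt p r R
  proof
    show "topological_group X G" using G_lie by (simp add: lie_group_def)
    show "topological_group Xt Gt" using Gt_lie by (simp add: lie_group_def)
  qed (use G_conn p_hom p_cov R_gens R_canc Hom_sc in auto)
  show ?thesis using factor_product_iso unfolding factor_product_def .
qed

end
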